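(* Let $A$ be a system of $n_A$ qubits and $B$ a system of $n_B$ qubits, and let $\mathcal{P}$ be a CPTP map from operators on $H_{A_1}\otimes H_{B_1}$ (time $t_1$) to operators on $H_{A_2}\otimes H_{B_2}$ (time $t_2$) that allows signalling in neither direction, i.e. there exist completely positive maps $\mathcal{T}$ (from $A_1$ to $A_2$) and $\mathcal{S}$ (from $B_1$ to $B_2$) with $\mathrm{Tr}_{B_2}\mathcal{P}(\rho)=\mathcal{T}(\mathrm{Tr}_{B_1}\rho)$ and $\mathrm{Tr}_{A_2}\mathcal{P}(\rho)=\mathcal{S}(\mathrm{Tr}_{A_1}\rho)$ for all states $\rho$ on $H_{A_1}\otimes H_{B_1}$. Then for every state $\rho_{A_1B_1}$ at time $t_1$, the pseudo-density matrices $R_{B_1A_2}$ and $R_{A_1B_2}$ are positive semidefinite and $f(R_{B_1A_2})=f(R_{A_1B_2})=0$.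
   Context: Pauli matrices $\sigma_0=\mathbb{1},\sigma_1,\sigma_2,\sigma_3$; multi-qubit Pauli matrices are tensor products of these. The coarse-grained measurement of a Pauli matrix $\Sigma$ on the full system $AB$ is the projective measurement $\{(\mathbb{1}\pm\Sigma)/2\}$ with outcomes $\pm1$ and Lüders update $\rho\mapsto P_\pm\rho P_\pm$. For an $n_B$-qubit Pauli $\tilde\sigma_j$ and an $n_A$-qubit Pauli $\tilde\sigma_k$: $\langle\tilde\sigma_j^{B_1},\tilde\sigma_k^{A_2}\rangle$ is the expected product of outcomes in the experiment: prepare $\rho_{A_1B_1}$, coarse-grained measurement of $\mathbb{1}_A\otimes\tilde\sigma_j$ at $t_1$, apply $\mathcal{P}$, coarse-grained measurement of $\tilde\sigma_k\otimes\mathbb{1}_B$ at $t_2$; and $R_{B_1A_2}=2^{-(n_A+n_B)}\sum_{j,k}\langle\tilde\sigma_j^{B_1},\tilde\sigma_k^{A_2}\rangle\,\tilde\sigma_j\otimes\tilde\sigma_k$. Analogously, $R_{A_1B_2}=2^{-(n_A+n_B)}\sum_{i,l}\langle\tilde\sigma_i^{A_1},\tilde\sigma_l^{B_2}\rangle\,\tilde\sigma_i\otimes\tilde\sigma_l$ with measurement of $\tilde\sigma_i\otimes\mathbb{1}_B$ at $t_1$ and $\mathbb{1}_A\otimes\tilde\sigma_l$ at $t_2$. The PDM negativity is $f(R)=\mathrm{Tr}\sqrt{RR^\dagger}-1$. *)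

theory Defs
  imports Complex_Main "Jordan_Normal_Form.Matrix"
begin

definition kron :: "complex mat \<Rightarrow> complex mat \<Rightarrow> complex mat" where
  "kron A B = mat (dim_row A * dim_row B) (dim_col A * dim_col B)
     (\<lambda>(i,j). A $$ (i div dim_row B, j div dim_col B) * B $$ (i mod dim_row B, j mod dim_col B))"

definition madj :: "complex mat \<Rightarrow> complex mat" where
  "madj A = mat (dim_col A) (dim_row A) (\<lambda>(i,j). cnj (A $$ (j,i)))"

definition mtrace :: "complex mat \<Rightarrow> complex" where
  "mtrace M = (\<Sum>i<dim_row M. M $$ (i,i))"

definition psd :: "nat \<Rightarrow> complex mat \<Rightarrow> bool" where
  "psd n M \<longleftrightarrow> M \<in> carrier_mat n n \<and> madj M = M \<and>
     (\<forall>v\<in>carrier_vec n. 0 \<le> Re ((M *\<^sub>v v) \<bullet>c v))"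

definition density :: "nat \<Rightarrow> complex mat \<Rightarrow> bool" where
  "density n \<rho> \<longleftrightarrow> psd n \<rho> \<and> mtrace \<rho> = 1"

definition msqrt :: "nat \<Rightarrow> complex mat \<Rightarrow> complex mat" where
  "msqrt n M = (THE S. psd n S \<and> S * S = M)"

definition pdm_neg :: "nat \<Rightarrow> complex mat \<Rightarrow> complex" where
  "pdm_neg n R = mtrace (msqrt n (R * madj R)) - 1"

definition pauli :: "nat \<Rightarrow> complex mat" where
  "pauli k = mat 2 2 (\<lambda>(i,j).
     if k = 0 then (if i = j then 1 else 0)
     else if k = 1 then (if i \<noteq> j then 1 else 0)
     else if k = 2 then (if i = 0 \<and> j = 1 then - \<i> else if i = 1 \<and> j = 0 then \<i> else 0)
     else (if i = j then (if i = 0 then 1 else -1) else 0))"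

fun pauli_str :: "nat list \<Rightarrow> complex mat" where
  "pauli_str [] = 1\<^sub>m 1"
| "pauli_str (k # ks) = kron (pauli k) (pauli_str ks)"

definition pauli_idx :: "nat \<Rightarrow> nat list set" where
  "pauli_idx n = {ks. length ks = n \<and> set ks \<subseteq> {..<4}}"

section \<open>Bipartite system A (x) B, dimensions dA, dB; index (a,b) \<mapsto> a*dB+b\<close>

definition ptrace_B :: "nat \<Rightarrow> nat \<Rightarrow> complex mat \<Rightarrow> complex mat" where
  "ptrace_B dA dB M = mat dA dA (\<lambda>(i,j). \<Sum>k<dB. M $$ (i*dB+k, j*dB+k))"

definition ptrace_A :: "nat \<Rightarrow> nat \<Rightarrow> complex mat \<Rightarrow> complex mat" where
  "ptrace_A dA dB M = mat dB dB (\<lambda>(i,j). \<Sum>k<dA. M $$ (k*dB+i, k*dB+j))"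

definition linear_op :: "nat \<Rightarrow> nat \<Rightarrow> (complex mat \<Rightarrow> complex mat) \<Rightarrow> bool" where
  "linear_op din dout \<Phi> \<longleftrightarrow>
     (\<forall>X\<in>carrier_mat din din. \<Phi> X \<in> carrier_mat dout dout) \<and>
     (\<forall>X\<in>carrier_mat din din. \<forall>Y\<in>carrier_mat din din. \<Phi> (X + Y) = \<Phi> X + \<Phi> Y) \<and>
     (\<forall>c. \<forall>X\<in>carrier_mat din din. \<Phi> (c \<cdot>\<^sub>m X) = c \<cdot>\<^sub>m \<Phi> X)"

text \<open>(id_k (x) Phi)(X): Phi applied to each din x din block of a (k*din) x (k*din) matrix\<close>
definition ampl :: "nat \<Rightarrow> nat \<Rightarrow> nat \<Rightarrow> (complex mat \<Rightarrow> complex mat) \<Rightarrow> complex mat \<Rightarrow> complex mat" where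
  "ampl k din dout \<Phi> X = mat (k*dout) (k*dout) (\<lambda>(i,j).
     \<Phi> (mat din din (\<lambda>(p,q). X $$ ((i div dout)*din + p, (j div dout)*din + q))) $$ (i mod dout, j mod dout))"

definition cp_map :: "nat \<Rightarrow> nat \<Rightarrow> (complex mat \<Rightarrow> complex mat) \<Rightarrow> bool" where
  "cp_map din dout \<Phi> \<longleftrightarrow> linear_op din dout \<Phi> \<and>
     (\<forall>k X. psd (k*din) X \<longrightarrow> psd (k*dout) (ampl k din dout \<Phi> X))"

definition cptp_map :: "nat \<Rightarrow> nat \<Rightarrow> (complex mat \<Rightarrow> complex mat) \<Rightarrow> bool" where
  "cptp_map din dout \<Phi> \<longleftrightarrow> cp_map din dout \<Phi> \<and>
     (\<forall>X\<in>carrier_mat din din. mtrace (\<Phi> X) = mtrace X)"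

definition no_signalling :: "nat \<Rightarrow> nat \<Rightarrow> (complex mat \<Rightarrow> complex mat) \<Rightarrow> bool" where
  "no_signalling dA dB P \<longleftrightarrow> (\<exists>T S. cp_map dA dA T \<and> cp_map dB dB S \<and>
     (\<forall>\<rho>. density (dA*dB) \<rho> \<longrightarrow>
        ptrace_B dA dB (P \<rho>) = T (ptrace_B dA dB \<rho>) \<and>
        ptrace_A dA dB (P \<rho>) = S (ptrace_A dA dB \<rho>)))"

definition proj :: "nat \<Rightarrow> complex mat \<Rightarrow> real \<Rightarrow> complex mat" where
  "proj d \<Sigma> s = complex_of_real (1/2) \<cdot>\<^sub>m (1\<^sub>m d + complex_of_real s \<cdot>\<^sub>m \<Sigma>)"

text \<open>Expected product of outcomes: measure Sigma1 (Lueders update), apply P, measure Sigma2.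
  The joint probability of outcomes (s,t) is Tr(Q_t P(P_s rho P_s)).\<close>
definition corr :: "nat \<Rightarrow> (complex mat \<Rightarrow> complex mat) \<Rightarrow> complex mat \<Rightarrow> complex mat \<Rightarrow> complex mat \<Rightarrow> real" where
  "corr d P \<Sigma>1 \<Sigma>2 \<rho> = (\<Sum>s\<in>{1,-1::real}. \<Sum>t\<in>{1,-1::real}.
     s * t * Re (mtrace (proj d \<Sigma>2 t * P (proj d \<Sigma>1 s * \<rho> * proj d \<Sigma>1 s))))"

definition R_B1A2 :: "nat \<Rightarrow> nat \<Rightarrow> (complex mat \<Rightarrow> complex mat) \<Rightarrow> complex mat \<Rightarrow> complex mat" where
  "R_B1A2 nA nB P \<rho> = mat (2^nB * 2^nA) (2^nB * 2^nA) (\<lambda>(a,b).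
     \<Sum>j\<in>pauli_idx nB. \<Sum>k\<in>pauli_idx nA.
       complex_of_real (corr (2^nA * 2^nB) P (kron (1\<^sub>m (2^nA)) (pauli_str j))
                                             (kron (pauli_str k) (1\<^sub>m (2^nB))) \<rho> / 2^(nA+nB))
       * kron (pauli_str j) (pauli_str k) $$ (a,b))"

definition R_A1B2 :: "nat \<Rightarrow> nat \<Rightarrow> (complex mat \<Rightarrow> complex mat) \<Rightarrow> complex mat \<Rightarrow> complex mat" where
  "R_A1B2 nA nB P \<rho> = mat (2^nA * 2^nB) (2^nA * 2^nB) (\<lambda>(a,b).
     \<Sum>i\<in>pauli_idx nA. \<Sum>l\<in>pauli_idx nB.
       complex_of_real (corr (2^nA * 2^nB) P (kron (pauli_str i) (1\<^sub>m (2^nB)))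
                                             (kron (1\<^sub>m (2^nA)) (pauli_str l)) \<rho> / 2^(nA+nB))
       * kron (pauli_str i) (pauli_str l) $$ (a,b))"

end

(* The measured correlations are expanded in the Pauli basis.  The difference of the two
   Lueders-updated states of a measurement of 1 (x) sigma_j is the anticommutator of 1 (x) sigma_j
   with rho, whose partial trace over B is Tr_B((1 (x) sigma_j) rho).  Hence, since B does not
   signal to A, the correlation of sigma_j on B at t1 with sigma_k on A at t2 is
   Tr(sigma_k T(Tr_B((1 (x) sigma_j) rho))), and Pauli completeness on both factors identifies
   R_B1A2 with (id_B (x) T) applied to rho with its factors exchanged.  Exchanging the roles of A
   and B gives R_A1B2 = (id_A (x) S)(rho).  Complete positivity of T and S makes both matrices
   positive semidefinite and trace preservation gives them unit trace.  Finally, for positive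
   semidefinite R we have R R^dagger = R^2, so by uniqueness of the positive square root
   Tr sqrt(R R^dagger) = Tr R = 1, i.e. f(R) = 0. *)

theory Submission
  imports Defs "Jordan_Normal_Form.Schur_Decomposition"
begin

lemma sum_mult_split: "(\<Sum>i<m*n. f i) = (\<Sum>a<m. \<Sum>b<n. f (a*n+b :: nat))"
proof -
  have "(\<Sum>i\<in>{a*n..<a*n+n}. f i) = (\<Sum>b<n. f (a*n+b))" for a
    using sum.shift_bounds_nat_ivl[of f 0 "a*n" n] by (simp add: atLeast0LessThan ac_simps)
  then show ?thesis using sum.nat_group[of f n m] by simp
qed

lemma pair_index_less: "a < m \<Longrightarrow> b < n \<Longrightarrow> a * n + b < m * (n::nat)"
proof -
  assume "a < m" "b < n"
  then have "a * n + b < Suc a * n" by simp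
  also have "\<dots> \<le> m * n" using \<open>a < m\<close> by (intro mult_right_mono) auto
  finally show ?thesis .
qed

lemma pair_index_eq_iff: assumes "b < n" "b' < (n::nat)" shows "a * n + b = a' * n + b' \<longleftrightarrow> a = a' \<and> b = b'"
proof
  assume "a * n + b = a' * n + b'"
  then have "(a * n + b) div n = (a' * n + b') div n" "(a * n + b) mod n = (a' * n + b') mod n" by simp_all
  then show "a = a' \<and> b = b'" using assms by simp
qed simp

lemma sum_indicator_mult:
  fixes g :: "nat \<Rightarrow> 'a :: semiring_1"
  shows "p < n \<Longrightarrow> (\<Sum>a<n. (if a = p then 1 else 0) * g a) = g p"
    "p < n \<Longrightarrow> (\<Sum>a<n. (if p = a then 1 else 0) * g a) = g p"
    "p < n \<Longrightarrow> (\<Sum>a<n. g a * (if a = p then 1 else 0)) = g p"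
  by (simp_all add: if_distrib[of "\<lambda>x. x * _"] if_distrib[of "\<lambda>x. _ * x"] sum.delta sum.delta' cong: if_cong)

lemma kron_dim[simp]: "dim_row (kron A B) = dim_row A * dim_row B" "dim_col (kron A B) = dim_col A * dim_col B"
  unfolding kron_def by simp_all

lemma kron_carrier_mat: "A \<in> carrier_mat r1 c1 \<Longrightarrow> B \<in> carrier_mat r2 c2 \<Longrightarrow> kron A B \<in> carrier_mat (r1*r2) (c1*c2)"
  unfolding carrier_mat_def by simp

lemma index_kron: "i < dim_row A * dim_row B \<Longrightarrow> j < dim_col A * dim_col B \<Longrightarrow>
  kron A B $$ (i,j) = A $$ (i div dim_row B, j div dim_col B) * B $$ (i mod dim_row B, j mod dim_col B)"
  unfolding kron_def by (subst index_mat) auto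

lemma index_kron_pair: assumes "A \<in> carrier_mat m m" "B \<in> carrier_mat n n" "a < m" "a' < m" "b < n" "b' < n"
  shows "kron A B $$ (a*n+b, a'*n+b') = A $$ (a,a') * B $$ (b,b')"
  using assms by (simp add: index_kron pair_index_less)

lemma eq_mat_pair_indexI:
  assumes "A \<in> carrier_mat (m*n) (m*n)" "B \<in> carrier_mat (m*n) (m*n)"
    and "\<And>a b a' b'. a < m \<Longrightarrow> b < n \<Longrightarrow> a' < m \<Longrightarrow> b' < n \<Longrightarrow> A $$ (a*n+b, a'*n+b') = B $$ (a*n+b, a'*n+b')"
  shows "A = B"
proof (rule eq_matI)
  fix i j assume "i < dim_row B" "j < dim_col B"
  then have "i < m*n" "j < m*n" using assms(2) by auto
  moreover have "n > 0" using \<open>i < m*n\<close> by (cases n) auto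
  ultimately have "i div n < m" "i mod n < n" "j div n < m" "j mod n < n"
    by (auto simp: less_mult_imp_div_less mult.commute)
  then show "A $$ (i,j) = B $$ (i,j)" using assms(3) by (metis div_mult_mod_eq)
qed (use assms(1,2) in auto)

lemma madj_dim[simp]: "dim_row (madj A) = dim_col A" "dim_col (madj A) = dim_row A"
  unfolding madj_def by simp_all

lemma index_madj[simp]: "i < dim_col A \<Longrightarrow> j < dim_row A \<Longrightarrow> madj A $$ (i,j) = cnj (A $$ (j,i))"
  unfolding madj_def by (subst index_mat) auto

lemma madj_carrier_mat: "A \<in> carrier_mat n m \<Longrightarrow> madj A \<in> carrier_mat m n"
  unfolding carrier_mat_def by simp

lemma madj_mult: "A \<in> carrier_mat n m \<Longrightarrow> B \<in> carrier_mat m p \<Longrightarrow> madj (A * B) = madj B * madj A"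
  by (rule eq_matI) (auto simp: scalar_prod_def cnj_sum mult.commute)

lemma madj_add: "A \<in> carrier_mat n m \<Longrightarrow> B \<in> carrier_mat n m \<Longrightarrow> madj (A + B) = madj A + madj B"
  by (rule eq_matI) auto

lemma madj_minus: "A \<in> carrier_mat n m \<Longrightarrow> B \<in> carrier_mat n m \<Longrightarrow> madj (A - B) = madj A - madj B"
  by (rule eq_matI) auto

lemma madj_smult: "madj (c \<cdot>\<^sub>m A) = cnj c \<cdot>\<^sub>m madj A"
  by (rule eq_matI) auto

lemma madj_one[simp]: "madj (1\<^sub>m n) = 1\<^sub>m n"
  by (rule eq_matI) auto

lemma madj_kron: "madj (kron A B) = kron (madj A) (madj B)"
proof (rule eq_matI)
  fix i j assume "i < dim_row (kron (madj A) (madj B))" "j < dim_col (kron (madj A) (madj B))"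
  then have i: "i < dim_col A * dim_col B" and j: "j < dim_row A * dim_row B" by auto
  then have "dim_col B > 0" "dim_row B > 0" by (auto intro!: gr0I)
  then have "i div dim_col B < dim_col A" "j div dim_row B < dim_row A"
    using i j by (auto simp: less_mult_imp_div_less)
  then show "madj (kron A B) $$ (i,j) = kron (madj A) (madj B) $$ (i,j)"
    using i j \<open>dim_col B > 0\<close> \<open>dim_row B > 0\<close> by (simp add: index_kron)
qed auto

lemma hermitian_entry: "madj M = M \<Longrightarrow> M \<in> carrier_mat n n \<Longrightarrow> i < n \<Longrightarrow> j < n \<Longrightarrow> M $$ (i,j) = cnj (M $$ (j,i))"
  by (metis carrier_matD index_madj)

lemma index_mult_mat_sum: "A \<in> carrier_mat n m \<Longrightarrow> B \<in> carrier_mat m p \<Longrightarrow> i < n \<Longrightarrow> j < p \<Longrightarrow>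
   (A * B) $$ (i,j) = (\<Sum>l<m. A $$ (i,l) * B $$ (l,j))"
  by (simp add: scalar_prod_def atLeast0LessThan)

lemma mtrace_mult: assumes "A \<in> carrier_mat n m" "B \<in> carrier_mat m n"
  shows "mtrace (A * B) = (\<Sum>i<n. \<Sum>l<m. A $$ (i,l) * B $$ (l,i))"
  using assms index_mult_mat_sum[OF assms] unfolding mtrace_def by simp

lemma mtrace_add: "A \<in> carrier_mat n n \<Longrightarrow> B \<in> carrier_mat n n \<Longrightarrow> mtrace (A + B) = mtrace A + mtrace B"
  unfolding mtrace_def by (simp add: sum.distrib)

lemma mtrace_smult: "A \<in> carrier_mat n n \<Longrightarrow> mtrace (c \<cdot>\<^sub>m A) = c * mtrace A"
  unfolding mtrace_def by (simp add: sum_distrib_left)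

lemma mtrace_mult_minus: assumes "A \<in> carrier_mat n n" "B \<in> carrier_mat n n" "C \<in> carrier_mat n n"
  shows "mtrace (A * (B - C)) = mtrace (A * B) - mtrace (A * C)"
proof -
  have BC: "B - C \<in> carrier_mat n n" by (rule minus_carrier_mat[OF assms(3)])
  show ?thesis unfolding mtrace_mult[OF assms(1,2)] mtrace_mult[OF assms(1,3)] mtrace_mult[OF assms(1) BC]
    using assms by (simp add: right_diff_distrib sum_subtractf)
qed

lemma mtrace_hermitian_mult_real: assumes A: "A \<in> carrier_mat n n" "madj A = A" and B: "B \<in> carrier_mat n n" "madj B = B"
  shows "mtrace (A * B) = complex_of_real (Re (mtrace (A * B)))"
proof -
  have "cnj (mtrace (A * B)) = (\<Sum>i<n. \<Sum>l<n. A $$ (l,i) * B $$ (i,l))"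
    unfolding mtrace_mult[OF A(1) B(1)] cnj_sum complex_cnj_mult
  proof (intro sum.cong refl)
    fix i l assume "i \<in> {..<n}" "l \<in> {..<n}"
    then show "cnj (A $$ (i,l)) * cnj (B $$ (l,i)) = A $$ (l,i) * B $$ (i,l)"
      using hermitian_entry[OF A(2,1), of l i] hermitian_entry[OF B(2,1), of i l] by simp
  qed
  also have "\<dots> = mtrace (A * B)" unfolding mtrace_mult[OF A(1) B(1)] by (rule sum.swap)
  finally show ?thesis by (simp add: complex_eq_iff)
qed

subsection \<open>Positive semidefinite matrices\<close>

lemma cscalar_prod_sum: "w \<in> carrier_vec n \<Longrightarrow> v \<bullet>c w = (\<Sum>i<n. v$i * cnj (w$i))"
  unfolding scalar_prod_def by (simp add: atLeast0LessThan)

lemma index_mult_mat_vec_sum: "M \<in> carrier_mat n m \<Longrightarrow> v \<in> carrier_vec m \<Longrightarrow> i < n \<Longrightarrow>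
  (M *\<^sub>v v) $ i = (\<Sum>j<m. M $$ (i,j) * v $ j)"
  by (simp add: scalar_prod_def atLeast0LessThan)

lemma quadratic_form_sum: "M \<in> carrier_mat n n \<Longrightarrow> v \<in> carrier_vec n \<Longrightarrow>
  (M *\<^sub>v v) \<bullet>c v = (\<Sum>i<n. (\<Sum>j<n. M $$ (i,j) * v $ j) * cnj (v $ i))"
  by (simp add: cscalar_prod_sum[of _ n] index_mult_mat_vec_sum del: index_mult_mat_vec)

lemma hermitian_cscalar_prod: assumes M: "M \<in> carrier_mat n n" "madj M = M"
  and v: "v \<in> carrier_vec n" and w: "w \<in> carrier_vec n"
  shows "(M *\<^sub>v w) \<bullet>c v = w \<bullet>c (M *\<^sub>v v)"
proof -
  have "(M *\<^sub>v w) \<bullet>c v = (\<Sum>i<n. \<Sum>j<n. M $$ (i,j) * w $ j * cnj (v$i))"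
    using M v w by (simp add: cscalar_prod_sum[of _ n] index_mult_mat_vec_sum sum_distrib_right
        del: index_mult_mat_vec)
  also have "\<dots> = (\<Sum>i<n. \<Sum>j<n. w $ j * cnj (M $$ (j,i)) * cnj (v$i))"
  proof (intro sum.cong refl)
    fix i j assume "i \<in> {..<n}" "j \<in> {..<n}"
    then show "M $$ (i,j) * w $ j * cnj (v$i) = w $ j * cnj (M $$ (j,i)) * cnj (v$i)"
      using hermitian_entry[OF M(2,1), of i j] by simp
  qed
  also have "\<dots> = (\<Sum>j<n. \<Sum>i<n. w $ j * cnj (M $$ (j,i)) * cnj (v$i))"
    by (rule sum.swap)
  also have "\<dots> = w \<bullet>c (M *\<^sub>v v)"
    using M v w by (simp add: cscalar_prod_sum[of _ n] index_mult_mat_vec_sum cnj_sum sum_distrib_left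
        mult_ac del: index_mult_mat_vec)
  finally show ?thesis .
qed

lemma cscalar_prod_self_pos: assumes "x \<in> carrier_vec n" "x \<noteq> 0\<^sub>v n"
  shows "x \<bullet>c x = complex_of_real (Re (x \<bullet>c x))" "Re (x \<bullet>c x) > 0"
proof -
  have "0 < x \<bullet>c x" using conjugate_square_greater_0_vec[OF assms(1)] assms(2) by simp
  then show "x \<bullet>c x = complex_of_real (Re (x \<bullet>c x))" "Re (x \<bullet>c x) > 0"
    by (simp_all add: less_complex_def complex_eq_iff)
qed
lemma psd_quadratic_form: assumes "psd n M" "v \<in> carrier_vec n"
  shows "(M *\<^sub>v v) \<bullet>c v = complex_of_real (Re ((M *\<^sub>v v) \<bullet>c v))" "Re ((M *\<^sub>v v) \<bullet>c v) \<ge> 0"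
proof -
  have M: "M \<in> carrier_mat n n" "madj M = M" using assms(1) unfolding psd_def by auto
  have "(M *\<^sub>v v) \<bullet>c v = cnj ((M *\<^sub>v v) \<bullet>c v)"
    using hermitian_cscalar_prod[OF M assms(2,2)] assms(2) M
    by (simp add: cscalar_prod_sum[of _ n] cnj_sum mult.commute)
  then show "(M *\<^sub>v v) \<bullet>c v = complex_of_real (Re ((M *\<^sub>v v) \<bullet>c v))"
    by (simp add: complex_eq_iff)
  show "Re ((M *\<^sub>v v) \<bullet>c v) \<ge> 0" using assms unfolding psd_def by blast
qed

lemma quadratic_nonneg_linear_coeff_zero:
  fixes a b :: real assumes b: "b \<ge> 0" and nonneg: "\<And>t. 0 \<le> 2*t*a + t^2*b"
  shows "a = 0"
proof -
  define t where "t = - a / (b+1)"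
  have a: "a = - t * (b+1)" using b unfolding t_def by simp
  have "2*t*a + t^2*b = - (t^2 * (b+2))" unfolding a by (simp add: algebra_simps power2_eq_square)
  then have "t^2 * (b+2) \<le> 0" using nonneg[of t] by simp
  then have "t = 0" using b by (simp add: mult_le_0_iff)
  then show ?thesis using a by simp
qed

lemma psd_quadratic_form_zero: assumes psd: "psd n M" and v: "v \<in> carrier_vec n"
  and q0: "Re ((M *\<^sub>v v) \<bullet>c v) = 0"
  shows "M *\<^sub>v v = 0\<^sub>v n"
proof -
  have M: "M \<in> carrier_mat n n" "madj M = M" using psd unfolding psd_def by auto
  define u where "u = M *\<^sub>v v"
  have u: "u \<in> carrier_vec n" and Mu: "M *\<^sub>v u \<in> carrier_vec n" using M v by (simp_all add: u_def)
  define a where "a = Re (u \<bullet>c u)"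
  define b where "b = Re ((M *\<^sub>v u) \<bullet>c u)"
  have a: "u \<bullet>c u = complex_of_real a" "a \<ge> 0"
    using conjugate_square_ge_0_vec[of u] by (auto simp: a_def less_eq_complex_def complex_eq_iff)
  have b: "b \<ge> 0" using psd u unfolding psd_def b_def by blast
  have Muv: "(M *\<^sub>v u) \<bullet>c v = u \<bullet>c u" unfolding u_def by (rule hermitian_cscalar_prod[OF M v]) (use M v in simp)
  \<comment> \<open>the quadratic form at v + t u is 2 t a + t^2 b, with a = |M v|^2\<close>
  have quad: "0 \<le> 2*t*a + t^2 * b" for t :: real
  proof -
    define x where "x = v + complex_of_real t \<cdot>\<^sub>v u"
    have x: "x \<in> carrier_vec n" using v u by (simp add: x_def)
    have Mx: "M *\<^sub>v x = u + complex_of_real t \<cdot>\<^sub>v (M *\<^sub>v u)"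
      unfolding x_def u_def using M v by (simp add: mult_add_distrib_mat_vec[of M n n] mult_mat_vec[of M n n])
    have "(M *\<^sub>v x) \<bullet>c x = (u \<bullet>c v) + complex_of_real t * (u \<bullet>c u) + complex_of_real t * ((M *\<^sub>v u) \<bullet>c v)
        + complex_of_real (t^2) * ((M *\<^sub>v u) \<bullet>c u)"
    proof -
      have "(M *\<^sub>v x) \<bullet>c x = (\<Sum>i<n. (u$i + complex_of_real t * (M *\<^sub>v u)$i) * cnj (v$i + complex_of_real t * u$i))"
        unfolding cscalar_prod_sum[OF x] Mx using u v Mu
        by (intro sum.cong refl) (simp add: x_def carrier_vecD[OF u] carrier_vecD[OF v] carrier_matD[OF M(1)])
      then show ?thesis using u v Mu
        by (simp add: cscalar_prod_sum[of _ n] sum.distrib sum_distrib_left algebra_simps power2_eq_square)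
    qed
    then have "Re ((M *\<^sub>v x) \<bullet>c x) = 2*t*a + t^2 * b"
      using q0 unfolding Muv a(1) by (simp add: u_def[symmetric] b_def)
    then show ?thesis using psd x unfolding psd_def by auto
  qed
  have "a = 0" by (rule quadratic_nonneg_linear_coeff_zero[OF b quad])
  then have "u \<bullet>c u = 0" using a by simp
  then show ?thesis using u by (simp add: u_def)
qed

lemma psd_add: assumes A: "psd n A" and B: "psd n B" shows "psd n (A + B)"
proof -
  have Ac: "A \<in> carrier_mat n n" "madj A = A" and Bc: "B \<in> carrier_mat n n" "madj B = B"
    using A B unfolding psd_def by auto
  have "((A + B) *\<^sub>v v) \<bullet>c v = (A *\<^sub>v v) \<bullet>c v + (B *\<^sub>v v) \<bullet>c v" if "v \<in> carrier_vec n" for v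
    using that Ac Bc by (simp add: quadratic_form_sum[of _ n] sum.distrib distrib_right)
  then show ?thesis using A B Ac Bc unfolding psd_def by (simp add: madj_add[of _ n n])
qed

lemma psd_smult: assumes A: "psd n A" and c: "c \<ge> 0" shows "psd n (complex_of_real c \<cdot>\<^sub>m A)"
proof -
  have Ac: "A \<in> carrier_mat n n" "madj A = A" using A unfolding psd_def by auto
  have "((complex_of_real c \<cdot>\<^sub>m A) *\<^sub>v v) \<bullet>c v = complex_of_real c * ((A *\<^sub>v v) \<bullet>c v)"
    if "v \<in> carrier_vec n" for v
    using that Ac by (simp add: quadratic_form_sum[of _ n] sum_distrib_left mult_ac)
  then show ?thesis using A Ac c unfolding psd_def by (simp add: madj_smult)
qed

lemma psd_hermitian_sandwich: assumes r: "psd n \<rho>" and K: "K \<in> carrier_mat n n" "madj K = K"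
  shows "psd n (K * \<rho> * K)"
proof -
  have rc: "\<rho> \<in> carrier_mat n n" "madj \<rho> = \<rho>" using r unfolding psd_def by auto
  have "((K * \<rho> * K) *\<^sub>v v) \<bullet>c v = (\<rho> *\<^sub>v (K *\<^sub>v v)) \<bullet>c (K *\<^sub>v v)" if v: "v \<in> carrier_vec n" for v
  proof -
    have "(K * \<rho> * K) *\<^sub>v v = K *\<^sub>v (\<rho> *\<^sub>v (K *\<^sub>v v))" using K rc v by (simp add: assoc_mult_mat_vec[of _ n n _ n])
    then show ?thesis using hermitian_cscalar_prod[OF K v, of "\<rho> *\<^sub>v (K *\<^sub>v v)"] K rc v by simp
  qed
  moreover have "madj (K * \<rho> * K) = K * \<rho> * K"
    using K rc by (simp add: madj_mult[of _ n n _ n] assoc_mult_mat[of _ n n _ n _ n])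
  ultimately show ?thesis using r K rc unfolding psd_def by simp
qed

lemma psd_mtrace: assumes X: "psd n X"
  shows "mtrace X = complex_of_real (Re (mtrace X))" "Re (mtrace X) \<ge> 0"
proof -
  have Xc: "X \<in> carrier_mat n n" using X unfolding psd_def by auto
  have diag: "X $$ (i,i) = complex_of_real (Re (X $$ (i,i)))" "Re (X $$ (i,i)) \<ge> 0" if "i < n" for i
  proof -
    have "conjugate (unit_vec n i) = (unit_vec n i :: complex vec)" using that by (intro eq_vecI) auto
    then have "X $$ (i,i) = (X *\<^sub>v unit_vec n i) \<bullet>c unit_vec n i" using that Xc by simp
    then show "X $$ (i,i) = complex_of_real (Re (X $$ (i,i)))" "Re (X $$ (i,i)) \<ge> 0"
      using psd_quadratic_form[OF X unit_vec_carrier] by metis+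
  qed
  have "mtrace X = (\<Sum>i<n. X $$ (i,i))" using Xc unfolding mtrace_def by simp
  also have "\<dots> = complex_of_real (\<Sum>i<n. Re (X $$ (i,i)))"
    unfolding of_real_sum by (rule sum.cong[OF refl]) (rule diag(1), simp)
  finally have "mtrace X = complex_of_real (\<Sum>i<n. Re (X $$ (i,i)))" .
  moreover have "(\<Sum>i<n. Re (X $$ (i,i))) \<ge> 0" using diag(2) by (intro sum_nonneg) simp
  ultimately show "mtrace X = complex_of_real (Re (mtrace X))" "Re (mtrace X) \<ge> 0" by simp_all
qed


subsection \<open>Uniqueness of the positive square root\<close>

lemma psd_sqrt_diff_eigenvector_forms_zero:
  assumes S: "psd n S" and T: "psd n T" and ST: "S * S = T * T"
    and x: "x \<in> carrier_vec n" "x \<noteq> 0\<^sub>v n" and Dx: "(S - T) *\<^sub>v x = \<mu> \<cdot>\<^sub>v x" and "\<mu> \<noteq> 0"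
  shows "Re ((S *\<^sub>v x) \<bullet>c x) = 0" "Re ((T *\<^sub>v x) \<bullet>c x) = 0"
proof -
  have Sc: "S \<in> carrier_mat n n" "madj S = S" and Tc: "T \<in> carrier_mat n n" "madj T = T"
    using S T unfolding psd_def by auto
  define s where "s = S *\<^sub>v x"
  define t where "t = T *\<^sub>v x"
  have sc: "s \<in> carrier_vec n" and tc: "t \<in> carrier_vec n" using Sc Tc x by (auto simp: s_def t_def)
  have "s - t = \<mu> \<cdot>\<^sub>v x"
    using Dx Sc Tc x by (simp add: s_def t_def minus_mult_distrib_mat_vec[of S n n T])
  have s_eq: "s $ i = t $ i + \<mu> * x $ i" if "i < n" for i
  proof -
    have "s $ i - t $ i = \<mu> * x $ i"
      using arg_cong[OF \<open>s - t = \<mu> \<cdot>\<^sub>v x\<close>, of "\<lambda>v. v $ i"] that tc x by simp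
    then show ?thesis by (simp add: algebra_simps)
  qed
  have "s \<bullet>c s = ((S * S) *\<^sub>v x) \<bullet>c x"
    unfolding s_def using hermitian_cscalar_prod[OF Sc x(1), of "S *\<^sub>v x"] Sc x by simp
  also have "\<dots> = t \<bullet>c t"
    unfolding ST t_def using hermitian_cscalar_prod[OF Tc x(1), of "T *\<^sub>v x"] Tc x by simp
  finally have "s \<bullet>c s = t \<bullet>c t" .
  moreover have "s \<bullet>c s = t \<bullet>c t + cnj \<mu> * (t \<bullet>c x) + \<mu> * (x \<bullet>c t) + \<mu> * cnj \<mu> * (x \<bullet>c x)"
    "s \<bullet>c x = t \<bullet>c x + \<mu> * (x \<bullet>c x)"
    using sc tc x(1) by (simp_all add: cscalar_prod_sum[of _ n] s_eq sum.distrib sum_distrib_left algebra_simps)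
  moreover have "x \<bullet>c t = t \<bullet>c x" unfolding t_def by (rule hermitian_cscalar_prod[OF Tc x(1) x(1), symmetric])
  moreover obtain qS where qS: "s \<bullet>c x = complex_of_real qS" "qS \<ge> 0"
    using psd_quadratic_form[OF S x(1)] unfolding s_def by blast
  moreover obtain qT where qT: "t \<bullet>c x = complex_of_real qT" "qT \<ge> 0"
    using psd_quadratic_form[OF T x(1)] unfolding t_def by blast
  moreover obtain r where r: "x \<bullet>c x = complex_of_real r" "r > 0"
    using cscalar_prod_self_pos[OF x] by blast
  ultimately have e1: "0 = cnj \<mu> * qT + \<mu> * qT + \<mu> * cnj \<mu> * r" and e2: "qS = qT + \<mu> * r"
    by (auto simp: add.assoc)
  \<comment> \<open>e2 forces \<mu> to be real, and then e1 reads \<mu> (qS + qT) = 0\<close>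
  define m where "m = (qS - qT) / r"
  have \<mu>: "\<mu> = complex_of_real m" using e2 \<open>r > 0\<close> unfolding m_def by (simp add: field_simps)
  have "0 = 2 * m * qT + m * m * r" using e1 unfolding \<mu>
    by (metis (no_types, lifting) Re_complex_of_real complex_cnj_complex_of_real mult_2 of_real_add
        of_real_mult of_real_0 distrib_right)
  then have "m * (qS + qT) = 0" unfolding m_def using \<open>r > 0\<close> by (simp add: field_simps)
  then have "qS = 0" "qT = 0" using \<mu> \<open>\<mu> \<noteq> 0\<close> qS(2) qT(2) by auto
  then show "Re ((S *\<^sub>v x) \<bullet>c x) = 0" "Re ((T *\<^sub>v x) \<bullet>c x) = 0"
    using qS(1) qT(1) unfolding s_def t_def by simp_all
qed

lemma psd_sqrt_diff_eigenvalue_zero: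
  assumes S: "psd n S" and T: "psd n T" and ST: "S * S = T * T"
    and ev: "eigenvector (S - T) x \<mu>"
  shows "\<mu> = 0"
proof (rule ccontr)
  assume "\<mu> \<noteq> 0"
  have Sc: "S \<in> carrier_mat n n" and Tc: "T \<in> carrier_mat n n" using S T unfolding psd_def by auto
  have x: "x \<in> carrier_vec n" "x \<noteq> 0\<^sub>v n" and Dx: "(S - T) *\<^sub>v x = \<mu> \<cdot>\<^sub>v x"
    using ev Sc Tc unfolding eigenvector_def by auto
  have "S *\<^sub>v x = 0\<^sub>v n" "T *\<^sub>v x = 0\<^sub>v n"
    using psd_quadratic_form_zero[OF S x(1)] psd_quadratic_form_zero[OF T x(1)]
      psd_sqrt_diff_eigenvector_forms_zero[OF S T ST x Dx \<open>\<mu> \<noteq> 0\<close>] by auto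
  then have "\<mu> \<cdot>\<^sub>v x = 0\<^sub>v n" using Dx Sc Tc x by (simp add: minus_mult_distrib_mat_vec[of S n n T])
  have "x = 0\<^sub>v n"
  proof (rule eq_vecI)
    fix i assume "i < dim_vec (0\<^sub>v n :: complex vec)"
    then have "\<mu> * x $ i = 0" using arg_cong[OF \<open>\<mu> \<cdot>\<^sub>v x = 0\<^sub>v n\<close>, of "\<lambda>v. v $ i"] x by simp
    then show "x $ i = 0\<^sub>v n $ i" using \<open>\<mu> \<noteq> 0\<close> \<open>i < dim_vec (0\<^sub>v n)\<close> by simp
  qed (use x in auto)
  then show False using x by simp
qed

lemma pow_mat_add: "A \<in> carrier_mat n n \<Longrightarrow> A ^\<^sub>m (a + b) = A ^\<^sub>m a * A ^\<^sub>m b"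
proof (induction b)
  case (Suc b)
  then show ?case by (simp add: assoc_mult_mat[of _ n n _ n _ n])
qed simp

lemma madj_pow_mat: assumes A: "A \<in> carrier_mat n n" "madj A = A" shows "madj (A ^\<^sub>m k) = A ^\<^sub>m k"
proof (induction k)
  case (Suc k)
  have "A * A ^\<^sub>m k = A ^\<^sub>m k * A"
    using pow_mat_add[OF A(1), of 1 k] pow_mat_add[OF A(1), of k 1] A(1) by simp
  then show ?case using Suc A by (simp add: madj_mult[of _ n n _ n])
qed (use A in simp)

lemma hermitian_square_zero: assumes M: "M \<in> carrier_mat n n" "madj M = M" and MM: "M * M = 0\<^sub>m n n"
  shows "M = 0\<^sub>m n n"
proof (rule eq_matI)
  fix i j assume "i < dim_row (0\<^sub>m n n :: complex mat)" "j < dim_col (0\<^sub>m n n :: complex mat)"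
  then have i: "i < n" and j: "j < n" by auto
  have "(M * M) $$ (i,i) = complex_of_real (\<Sum>l<n. (cmod (M $$ (i,l)))^2)"
    unfolding index_mult_mat_sum[OF M(1) M(1) i i] of_real_sum
  proof (rule sum.cong[OF refl])
    fix l assume "l \<in> {..<n}"
    then have "M $$ (l,i) = cnj (M $$ (i,l))" using hermitian_entry[OF M(2,1), of l i] i by simp
    then show "M $$ (i,l) * M $$ (l,i) = complex_of_real ((cmod (M $$ (i,l)))^2)"
      using complex_norm_square[of "M $$ (i,l)"] by simp
  qed
  then have "complex_of_real (\<Sum>l<n. (cmod (M $$ (i,l)))^2) = 0" using MM i by simp
  then have "(\<Sum>l<n. (cmod (M $$ (i,l)))^2) = 0" by (simp only: of_real_eq_0_iff)
  then have "\<forall>l\<in>{..<n}. (cmod (M $$ (i,l)))^2 = 0" by (subst sum_nonneg_eq_0_iff[symmetric]) auto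
  then show "M $$ (i,j) = 0\<^sub>m n n $$ (i,j)" using i j by simp
qed (use M in auto)

lemma hermitian_nilpotent_zero: assumes D: "D \<in> carrier_mat n n" "madj D = D" and Dk: "D ^\<^sub>m k = 0\<^sub>m n n"
  shows "D = 0\<^sub>m n n"
proof -
  have pow2: "D ^\<^sub>m (2^m) = 0\<^sub>m n n \<Longrightarrow> D = 0\<^sub>m n n" for m
  proof (induction m)
    case (Suc m)
    have "D ^\<^sub>m (2^m) * D ^\<^sub>m (2^m) = D ^\<^sub>m (2^Suc m)" using pow_mat_add[OF D(1), of "2^m" "2^m"] by (simp add: mult_2)
    then have "D ^\<^sub>m (2^m) = 0\<^sub>m n n" using Suc.prems hermitian_square_zero[of "D ^\<^sub>m (2^m)" n] D madj_pow_mat[OF D] by simp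
    then show ?case by (rule Suc.IH)
  qed (use D in simp)
  have "k \<le> 2^k" using less_exp[of k] by simp
  then have "D ^\<^sub>m (2^k) = D ^\<^sub>m k * D ^\<^sub>m (2^k - k)" using pow_mat_add[OF D(1), of k "2^k - k"] by simp
  also have "\<dots> = 0\<^sub>m n n" using Dk D by simp
  finally show ?thesis by (rule pow2)
qed

lemma strictly_upper_triangular_pow_mat:
  assumes B: "B \<in> carrier_mat n n" and su: "\<And>i j. i < n \<Longrightarrow> j < n \<Longrightarrow> j \<le> i \<Longrightarrow> B $$ (i,j) = 0"
  shows "i < n \<Longrightarrow> j < n \<Longrightarrow> j < i + k \<Longrightarrow> (B ^\<^sub>m k) $$ (i,j) = 0"
proof (induction k arbitrary: i j)
  case (Suc k)
  have "(B ^\<^sub>m Suc k) $$ (i,j) = (\<Sum>l<n. (B ^\<^sub>m k) $$ (i,l) * B $$ (l,j))"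
    using B Suc.prems by (simp add: scalar_prod_def atLeast0LessThan)
  also have "\<dots> = 0"
  proof (rule sum.neutral, rule ballI)
    fix l assume "l \<in> {..<n}"
    then show "(B ^\<^sub>m k) $$ (i,l) * B $$ (l,j) = 0"
      using Suc.IH[of i l] su[of l j] Suc.prems by (cases "l < i + k") auto
  qed
  finally show ?case .
qed (use B in simp)

lemma hermitian_eigenvalues_zero_imp_zero: assumes D: "(D :: complex mat) \<in> carrier_mat n n" "madj D = D"
  and ev: "\<And>x \<mu>. eigenvector D x \<mu> \<Longrightarrow> \<mu> = 0"
  shows "D = 0\<^sub>m n n"
proof -
  obtain as where cp: "char_poly D = (\<Prod>a\<leftarrow>as. [:- a, 1:])" and las: "length as = n"
    using char_poly_factorized[OF D(1)] by blast
  obtain B P Q where sd: "schur_decomposition D as = (B,P,Q)" by (cases "schur_decomposition D as") auto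
  from schur_decomposition[OF D(1) cp sd]
  have sim: "similar_mat_wit D B P Q" and ut: "upper_triangular B" and dg: "diag_mat B = as" by auto
  have carr: "B \<in> carrier_mat n n" "P \<in> carrier_mat n n" "Q \<in> carrier_mat n n"
    using sim D unfolding similar_mat_wit_def Let_def by auto
  have as0: "a = 0" if "a \<in> set as" for a
  proof -
    have "poly (char_poly D) a = 0" unfolding cp poly_prod_list using that by (induction as) auto
    then show ?thesis using ev eigenvalue_root_char_poly[OF D(1)] unfolding eigenvalue_def by blast
  qed
  \<comment> \<open>the Schur form B has the eigenvalues on its diagonal, so it is strictly upper triangular\<close>
  have su: "B $$ (i,j) = 0" if "i < n" "j < n" "j \<le> i" for i j
  proof (cases "j < i")
    case False
    then have "B $$ (i,i) \<in> set as" using dg carr las that unfolding diag_mat_def by auto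
    then show ?thesis using as0 False that by simp
  qed (use ut carr that in \<open>auto simp: upper_triangular_def\<close>)
  have "B ^\<^sub>m n = 0\<^sub>m n n"
    by (rule eq_matI) (use strictly_upper_triangular_pow_mat[OF carr(1) su] carr in auto)
  then have "D ^\<^sub>m n = 0\<^sub>m n n" using similar_mat_wit_pow_id[OF sim, of n] carr by simp
  then show ?thesis by (rule hermitian_nilpotent_zero[OF D])
qed

lemma psd_sqrt_unique: assumes S: "psd n S" and T: "psd n T" and ST: "S * S = T * T"
  shows "S = T"
proof -
  have Sc: "S \<in> carrier_mat n n" "madj S = S" and Tc: "T \<in> carrier_mat n n" "madj T = T"
    using S T unfolding psd_def by auto
  have "S - T = 0\<^sub>m n n"
    by (rule hermitian_eigenvalues_zero_imp_zero)
      (use Sc Tc psd_sqrt_diff_eigenvalue_zero[OF S T ST] in \<open>auto simp: madj_minus[of _ n n]\<close>)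
  show ?thesis
  proof (rule eq_matI)
    fix i j assume "i < dim_row T" "j < dim_col T"
    then show "S $$ (i,j) = T $$ (i,j)"
      using Sc Tc arg_cong[OF \<open>S - T = 0\<^sub>m n n\<close>, of "\<lambda>M. M $$ (i,j)"] by simp
  qed (use Sc Tc in auto)
qed

lemma msqrt_psd_square: assumes R: "psd n R" shows "msqrt n (R * madj R) = R"
proof -
  have "madj R = R" using R unfolding psd_def by auto
  then show ?thesis unfolding msqrt_def using R psd_sqrt_unique[OF _ R] by (intro the_equality) auto
qed

lemma pdm_neg_density: "density n R \<Longrightarrow> pdm_neg n R = 0"
  unfolding density_def pdm_neg_def by (simp add: msqrt_psd_square)


lemma pauli_carrier_mat[simp]: "pauli k \<in> carrier_mat 2 2"
  unfolding pauli_def by simp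

lemma pauli_dim[simp]: "dim_row (pauli k) = 2" "dim_col (pauli k) = 2"
  using pauli_carrier_mat by blast+

lemma index_pauli: "i < 2 \<Longrightarrow> j < 2 \<Longrightarrow> pauli k $$ (i,j) =
     (if k = 0 then (if i = j then 1 else 0)
     else if k = 1 then (if i \<noteq> j then 1 else 0)
     else if k = 2 then (if i = 0 \<and> j = 1 then - \<i> else if i = 1 \<and> j = 0 then \<i> else 0)
     else (if i = j then (if i = 0 then 1 else -1) else 0))"
  unfolding pauli_def by (subst index_mat) auto

lemma pauli_str_carrier_mat[simp]: "pauli_str ks \<in> carrier_mat (2^length ks) (2^length ks)"
  by (induction ks) (auto intro: kron_carrier_mat[OF pauli_carrier_mat, of _ "2^_" "2^_", simplified])

lemma pauli_str_dim[simp]: "dim_row (pauli_str ks) = 2^length ks" "dim_col (pauli_str ks) = 2^length ks"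
  using pauli_str_carrier_mat by blast+

lemma pauli_idx_carrier_mat: "ks \<in> pauli_idx n \<Longrightarrow> pauli_str ks \<in> carrier_mat (2^n) (2^n)"
  using pauli_str_carrier_mat[of ks] by (simp add: pauli_idx_def)

lemma madj_pauli: "madj (pauli k) = pauli k"
proof (rule eq_matI)
  fix i j assume "i < dim_row (pauli k)" "j < dim_col (pauli k)"
  then have "i \<in> {0,1}" "j \<in> {0,1}" by auto
  then show "madj (pauli k) $$ (i,j) = pauli k $$ (i,j)" by (auto simp: index_pauli)
qed auto

lemma madj_pauli_str: "madj (pauli_str ks) = pauli_str ks"
  by (induction ks) (auto simp: madj_kron madj_pauli)

lemma finite_pauli_idx[simp]: "finite (pauli_idx n)"
  using finite_lists_length_eq[of "{..<4::nat}" n] unfolding pauli_idx_def by (simp add: conj_commute)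

lemma pauli_idx_Suc: "pauli_idx (Suc n) = (\<lambda>(k,ks). k#ks) ` ({..<4} \<times> pauli_idx n)"
proof
  show "pauli_idx (Suc n) \<subseteq> (\<lambda>(k,ks). k#ks) ` ({..<4} \<times> pauli_idx n)"
  proof
    fix xs assume "xs \<in> pauli_idx (Suc n)"
    then obtain k ks where "xs = k#ks" "k < 4" "ks \<in> pauli_idx n"
      by (cases xs) (auto simp: pauli_idx_def)
    then show "xs \<in> (\<lambda>(k,ks). k#ks) ` ({..<4} \<times> pauli_idx n)" by force
  qed
qed (auto simp: pauli_idx_def)

lemma sum_pauli_products: assumes "b < 2" "b' < 2" "c < 2" "c' < 2"
  shows "(\<Sum>k<4. pauli k $$ (b,b') * pauli k $$ (c,c')) = (if b = c' \<and> b' = c then 2 else 0)"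
proof -
  have "{..<4::nat} = {0,1,2,3}" by auto
  then have "(\<Sum>k<4. pauli k $$ (b,b') * pauli k $$ (c,c')) = pauli 0 $$ (b,b') * pauli 0 $$ (c,c') +
      pauli 1 $$ (b,b') * pauli 1 $$ (c,c') + pauli 2 $$ (b,b') * pauli 2 $$ (c,c') + pauli 3 $$ (b,b') * pauli 3 $$ (c,c')"
    by simp
  moreover have "b = 0 \<or> b = 1" "b' = 0 \<or> b' = 1" "c = 0 \<or> c = 1" "c' = 0 \<or> c' = 1" using assms by auto
  ultimately show ?thesis by (elim disjE) (simp_all add: index_pauli)
qed

lemma sum_pauli_str_products: assumes "b < 2^n" "b' < 2^n" "c < 2^n" "c' < 2^n"
  shows "(\<Sum>ks\<in>pauli_idx n. pauli_str ks $$ (b,b') * pauli_str ks $$ (c,c')) =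
    (if b = c' \<and> b' = c then 2^n else 0)"
  using assms
proof (induction n arbitrary: b b' c c')
  case 0
  have "pauli_idx 0 = {[]}" by (auto simp: pauli_idx_def)
  then show ?case using 0 by simp
next
  case (Suc n)
  define D :: nat where "D = 2^n"
  have lt: "x div D < 2" "x mod D < D" if "x < 2^Suc n" for x
    using that by (auto simp: D_def less_mult_imp_div_less)
  have "(\<Sum>ks\<in>pauli_idx (Suc n). pauli_str ks $$ (b,b') * pauli_str ks $$ (c,c'))
     = (\<Sum>(k,ks)\<in>{..<4} \<times> pauli_idx n. pauli_str (k # ks) $$ (b,b') * pauli_str (k # ks) $$ (c,c'))"
    unfolding pauli_idx_Suc by (subst sum.reindex) (auto simp: inj_on_def case_prod_beta)
  also have "\<dots> = (\<Sum>k<4. pauli k $$ (b div D, b' div D) * pauli k $$ (c div D, c' div D))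
        * (\<Sum>ks\<in>pauli_idx n. pauli_str ks $$ (b mod D, b' mod D) * pauli_str ks $$ (c mod D, c' mod D))"
    unfolding sum.cartesian_product[symmetric] sum_product
    using Suc.prems by (intro sum.cong refl) (auto simp: pauli_idx_def index_kron D_def)
  also have "\<dots> = (if b div D = c' div D \<and> b' div D = c div D then 2 else 0) *
                   (if b mod D = c' mod D \<and> b' mod D = c mod D then 2^n else 0)"
    using Suc.prems lt by (simp add: sum_pauli_products Suc.IH[unfolded D_def[symmetric]] D_def)
  also have "\<dots> = (if b = c' \<and> b' = c then 2^Suc n else 0)"
    by (auto simp: D_def) (metis div_mult_mod_eq)+
  finally show ?case .
qed

lemma pauli_expansion: assumes M: "M \<in> carrier_mat (2^n) (2^n)" and a: "a < 2^n" "a' < 2^n"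
  shows "(\<Sum>ks\<in>pauli_idx n. mtrace (pauli_str ks * M) * pauli_str ks $$ (a,a')) = 2^n * M $$ (a,a')"
proof -
  have "(\<Sum>ks\<in>pauli_idx n. mtrace (pauli_str ks * M) * pauli_str ks $$ (a,a'))
      = (\<Sum>ks\<in>pauli_idx n. \<Sum>x<2^n. \<Sum>y<2^n. M $$ (y,x) * (pauli_str ks $$ (x,y) * pauli_str ks $$ (a,a')))"
    by (rule sum.cong[OF refl]) (simp add: mtrace_mult[OF pauli_idx_carrier_mat M] sum_distrib_left sum_distrib_right mult_ac)
  also have "\<dots> = (\<Sum>x<2^n. \<Sum>y<2^n. M $$ (y,x) * (\<Sum>ks\<in>pauli_idx n. pauli_str ks $$ (x,y) * pauli_str ks $$ (a,a')))"
    by (simp add: sum_distrib_left sum.swap[of _ "pauli_idx n"])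
  also have "\<dots> = (\<Sum>x<2^n. (if x = a' then 1 else 0) * (\<Sum>y<2^n. (if y = a then 1 else 0) * (2^n * M $$ (y,x))))"
    by (rule sum.cong[OF refl]) (auto simp: sum_pauli_str_products a intro!: sum.cong)
  also have "\<dots> = 2^n * M $$ (a,a')" using a by (simp add: sum_indicator_mult)
  finally show ?thesis .
qed

definition mat_block :: "nat \<Rightarrow> complex mat \<Rightarrow> nat \<Rightarrow> nat \<Rightarrow> complex mat" where
  "mat_block d M p q = mat d d (\<lambda>(c,c'). M $$ (p*d+c, q*d+c'))"

lemma mat_block_carrier_mat[simp]: "mat_block d M p q \<in> carrier_mat d d"
  unfolding mat_block_def by simp

lemma index_mat_block[simp]: "c < d \<Longrightarrow> c' < d \<Longrightarrow> mat_block d M p q $$ (c,c') = M $$ (p*d+c, q*d+c')"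
  unfolding mat_block_def by simp

lemma mat_block_dim[simp]: "dim_row (mat_block d M p q) = d" "dim_col (mat_block d M p q) = d"
  unfolding mat_block_def by simp_all

lemma ptrace_B_carrier_mat[simp]: "ptrace_B dA dB M \<in> carrier_mat dA dA"
  and ptrace_A_carrier_mat[simp]: "ptrace_A dA dB M \<in> carrier_mat dB dB"
  unfolding ptrace_B_def ptrace_A_def by simp_all

lemma ptrace_dim[simp]:
  "dim_row (ptrace_B dA dB M) = dA" "dim_col (ptrace_B dA dB M) = dA"
  "dim_row (ptrace_A dA dB M) = dB" "dim_col (ptrace_A dA dB M) = dB"
  unfolding ptrace_B_def ptrace_A_def by simp_all

lemma index_ptrace_B: "i < dA \<Longrightarrow> j < dA \<Longrightarrow> ptrace_B dA dB M $$ (i,j) = (\<Sum>k<dB. M $$ (i*dB+k, j*dB+k))"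
  and index_ptrace_A: "i < dB \<Longrightarrow> j < dB \<Longrightarrow> ptrace_A dA dB M $$ (i,j) = (\<Sum>k<dA. M $$ (k*dB+i, k*dB+j))"
  unfolding ptrace_B_def ptrace_A_def by simp_all

lemma ptrace_B_add: "A \<in> carrier_mat (dA*dB) (dA*dB) \<Longrightarrow> B \<in> carrier_mat (dA*dB) (dA*dB) \<Longrightarrow>
  ptrace_B dA dB (A + B) = ptrace_B dA dB A + ptrace_B dA dB B"
  by (rule eq_matI) (auto simp: index_ptrace_B pair_index_less sum.distrib)

lemma ptrace_B_smult: "A \<in> carrier_mat (dA*dB) (dA*dB) \<Longrightarrow> ptrace_B dA dB (c \<cdot>\<^sub>m A) = c \<cdot>\<^sub>m ptrace_B dA dB A"
  by (rule eq_matI) (auto simp: index_ptrace_B pair_index_less sum_distrib_left)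

lemma mtrace_ptrace_B: "M \<in> carrier_mat (dA*dB) (dA*dB) \<Longrightarrow> mtrace (ptrace_B dA dB M) = mtrace M"
  unfolding mtrace_def by (simp add: index_ptrace_B sum_mult_split)

lemma mtrace_kron_one_mult: assumes s: "\<sigma> \<in> carrier_mat dA dA" and G: "G \<in> carrier_mat (dA*dB) (dA*dB)"
  shows "mtrace (kron \<sigma> (1\<^sub>m dB) * G) = mtrace (\<sigma> * ptrace_B dA dB G)"
proof -
  have K: "kron \<sigma> (1\<^sub>m dB) \<in> carrier_mat (dA*dB) (dA*dB)" using kron_carrier_mat[OF s one_carrier_mat] .
  have "mtrace (kron \<sigma> (1\<^sub>m dB) * G) = (\<Sum>a<dA. \<Sum>b<dB. \<Sum>a'<dA. \<Sum>b'<dB.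
      (if b = b' then 1 else 0) * (\<sigma> $$ (a,a') * G $$ (a'*dB+b', a*dB+b)))"
    using s by (simp add: mtrace_mult[OF K G] sum_mult_split index_kron pair_index_less mult_ac)
  also have "\<dots> = (\<Sum>a<dA. \<Sum>a'<dA. \<sigma> $$ (a,a') * (\<Sum>b<dB. G $$ (a'*dB+b, a*dB+b)))"
    by (simp add: sum_indicator_mult sum_distrib_left sum.swap[of _ "{..<dB}"])
  also have "\<dots> = mtrace (\<sigma> * ptrace_B dA dB G)"
    using s by (simp add: mtrace_mult[of _ dA dA] index_ptrace_B)
  finally show ?thesis .
qed

lemma index_ptrace_B_kron_one_mult:
  assumes s: "\<sigma> \<in> carrier_mat dB dB" and r: "\<rho> \<in> carrier_mat (dA*dB) (dA*dB)" and pq: "p < dA" "q < dA"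
  shows "ptrace_B dA dB (kron (1\<^sub>m dA) \<sigma> * \<rho>) $$ (p,q) = mtrace (\<sigma> * mat_block dB \<rho> p q)"
proof -
  have K: "kron (1\<^sub>m dA) \<sigma> \<in> carrier_mat (dA*dB) (dA*dB)" using kron_carrier_mat[OF one_carrier_mat s] .
  have "ptrace_B dA dB (kron (1\<^sub>m dA) \<sigma> * \<rho>) $$ (p,q)
      = (\<Sum>c<dB. \<Sum>a<dA. (if p = a then 1 else 0) * (\<Sum>c'<dB. \<sigma> $$ (c,c') * \<rho> $$ (a*dB+c', q*dB+c)))"
    using pq s by (simp add: index_ptrace_B index_mult_mat_sum[OF K r] sum_mult_split pair_index_less
        index_kron sum_distrib_left mult.assoc)
  also have "\<dots> = mtrace (\<sigma> * mat_block dB \<rho> p q)"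
    using pq s by (simp add: sum_indicator_mult mtrace_mult[of _ dB dB])
  finally show ?thesis .
qed

lemma index_ptrace_B_mult_kron_one:
  assumes s: "\<sigma> \<in> carrier_mat dB dB" and r: "\<rho> \<in> carrier_mat (dA*dB) (dA*dB)" and pq: "p < dA" "q < dA"
  shows "ptrace_B dA dB (\<rho> * kron (1\<^sub>m dA) \<sigma>) $$ (p,q) = mtrace (\<sigma> * mat_block dB \<rho> p q)"
proof -
  have K: "kron (1\<^sub>m dA) \<sigma> \<in> carrier_mat (dA*dB) (dA*dB)" using kron_carrier_mat[OF one_carrier_mat s] .
  have "ptrace_B dA dB (\<rho> * kron (1\<^sub>m dA) \<sigma>) $$ (p,q)
      = (\<Sum>c<dB. \<Sum>a<dA. \<Sum>c'<dB. \<rho> $$ (p*dB+c, a*dB+c') * ((if a = q then 1 else 0) * \<sigma> $$ (c',c)))"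
    using pq s by (simp add: index_ptrace_B index_mult_mat_sum[OF r K] sum_mult_split pair_index_less index_kron)
  also have "\<dots> = (\<Sum>c<dB. \<Sum>c'<dB. \<Sum>a<dA. (if a = q then 1 else 0) * (\<rho> $$ (p*dB+c, a*dB+c') * \<sigma> $$ (c',c)))"
    by (rule sum.cong[OF refl], subst sum.swap) (simp add: mult_ac)
  also have "\<dots> = (\<Sum>c<dB. \<Sum>c'<dB. \<sigma> $$ (c',c) * \<rho> $$ (p*dB+c, q*dB+c'))"
    using pq by (simp add: sum_indicator_mult mult.commute)
  also have "\<dots> = mtrace (\<sigma> * mat_block dB \<rho> p q)"
    using s by (simp add: mtrace_mult[of _ dB dB]) (rule sum.swap)
  finally show ?thesis .
qed

subsection \<open>Exchanging the two subsystems\<close>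

text \<open>The operator on B \<otimes> A corresponding to an operator on A \<otimes> B: the index a*dB+b of A \<otimes> B
  becomes the index b*dA+a of B \<otimes> A.\<close>

definition swap_mat :: "nat \<Rightarrow> nat \<Rightarrow> complex mat \<Rightarrow> complex mat" where
  "swap_mat dA dB M = mat (dB*dA) (dB*dA) (\<lambda>(i,j). M $$ ((i mod dA)*dB + i div dA, (j mod dA)*dB + j div dA))"

lemma swap_mat_carrier_mat[simp]: "swap_mat dA dB M \<in> carrier_mat (dB*dA) (dB*dA)"
  unfolding swap_mat_def by simp

lemma swap_mat_dim[simp]: "dim_row (swap_mat dA dB M) = dB*dA" "dim_col (swap_mat dA dB M) = dB*dA"
  unfolding swap_mat_def by simp_all

lemma index_swap_mat: "b < dB \<Longrightarrow> a < dA \<Longrightarrow> b' < dB \<Longrightarrow> a' < dA \<Longrightarrow>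
  swap_mat dA dB M $$ (b*dA+a, b'*dA+a') = M $$ (a*dB+b, a'*dB+b')"
  unfolding swap_mat_def by (simp add: pair_index_less)

lemma swap_mat_swap_mat: "M \<in> carrier_mat (dA*dB) (dA*dB) \<Longrightarrow> swap_mat dB dA (swap_mat dA dB M) = M"
  by (rule eq_mat_pair_indexI[of _ dA dB]) (simp_all add: index_swap_mat)

lemma swap_mat_add: "A \<in> carrier_mat (dA*dB) (dA*dB) \<Longrightarrow> B \<in> carrier_mat (dA*dB) (dA*dB) \<Longrightarrow>
  swap_mat dA dB (A + B) = swap_mat dA dB A + swap_mat dA dB B"
  by (rule eq_mat_pair_indexI[of _ dB dA]) (simp_all add: index_swap_mat pair_index_less)

lemma swap_mat_smult: "A \<in> carrier_mat (dA*dB) (dA*dB) \<Longrightarrow> swap_mat dA dB (c \<cdot>\<^sub>m A) = c \<cdot>\<^sub>m swap_mat dA dB A"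
  by (rule eq_mat_pair_indexI[of _ dB dA]) (simp_all add: index_swap_mat pair_index_less)

lemma swap_mat_one: "swap_mat dA dB (1\<^sub>m (dA*dB)) = 1\<^sub>m (dB*dA)"
  by (rule eq_mat_pair_indexI[of _ dB dA]) (auto simp: index_swap_mat pair_index_less pair_index_eq_iff)

lemma swap_mat_mult: assumes AB: "A \<in> carrier_mat (dA*dB) (dA*dB)" "B \<in> carrier_mat (dA*dB) (dA*dB)"
  shows "swap_mat dA dB (A * B) = swap_mat dA dB A * swap_mat dA dB B"
proof (rule eq_mat_pair_indexI[of _ dB dA])
  fix b a b' a' assume ba: "b < dB" "a < dA" "b' < dB" "a' < dA"
  have "swap_mat dA dB (A * B) $$ (b*dA+a, b'*dA+a') = (\<Sum>e<dA. \<Sum>c<dB. A $$ (a*dB+b, e*dB+c) * B $$ (e*dB+c, a'*dB+b'))"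
    using ba by (simp add: index_swap_mat index_mult_mat_sum[OF AB] pair_index_less sum_mult_split)
  also have "\<dots> = (\<Sum>c<dB. \<Sum>e<dA. A $$ (a*dB+b, e*dB+c) * B $$ (e*dB+c, a'*dB+b'))"
    by (rule sum.swap)
  also have "\<dots> = (swap_mat dA dB A * swap_mat dA dB B) $$ (b*dA+a, b'*dA+a')"
    using ba by (subst index_mult_mat_sum[OF swap_mat_carrier_mat swap_mat_carrier_mat])
      (simp_all add: index_swap_mat pair_index_less sum_mult_split)
  finally show "swap_mat dA dB (A * B) $$ (b*dA+a, b'*dA+a') = (swap_mat dA dB A * swap_mat dA dB B) $$ (b*dA+a, b'*dA+a')" .
qed (use AB in \<open>auto intro: mult_carrier_mat\<close>)

lemma swap_mat_kron: assumes "A \<in> carrier_mat dA dA" "B \<in> carrier_mat dB dB"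
  shows "swap_mat dA dB (kron A B) = kron B A"
  by (rule eq_mat_pair_indexI[of _ dB dA]) (use assms in \<open>simp_all add: index_swap_mat index_kron_pair kron_carrier_mat\<close>)

lemma mtrace_swap_mat: "M \<in> carrier_mat (dA*dB) (dA*dB) \<Longrightarrow> mtrace (swap_mat dA dB M) = mtrace M"
  unfolding mtrace_def by (simp add: sum_mult_split index_swap_mat) (rule sum.swap)

lemma ptrace_B_swap_mat: "ptrace_B dB dA (swap_mat dA dB M) = ptrace_A dA dB M"
  by (rule eq_matI) (simp_all add: index_ptrace_B index_ptrace_A index_swap_mat)

lemma ptrace_A_swap_mat: "ptrace_A dB dA (swap_mat dA dB M) = ptrace_B dA dB M"
  by (rule eq_matI) (simp_all add: index_ptrace_B index_ptrace_A index_swap_mat)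

lemma madj_swap_mat: "M \<in> carrier_mat (dA*dB) (dA*dB) \<Longrightarrow> madj (swap_mat dA dB M) = swap_mat dA dB (madj M)"
  by (rule eq_mat_pair_indexI[of _ dB dA]) (simp_all add: index_swap_mat pair_index_less madj_carrier_mat carrier_matD)

lemma psd_swap_mat: assumes r: "psd (dA*dB) \<rho>" shows "psd (dB*dA) (swap_mat dA dB \<rho>)"
proof -
  have rc: "\<rho> \<in> carrier_mat (dA*dB) (dA*dB)" "madj \<rho> = \<rho>" using r unfolding psd_def by auto
  have "0 \<le> Re ((swap_mat dA dB \<rho> *\<^sub>v v) \<bullet>c v)" if v: "v \<in> carrier_vec (dB*dA)" for v
  proof -
    define w where "w = vec (dA*dB) (\<lambda>l. v $ ((l mod dB)*dA + l div dB))"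
    have w: "w \<in> carrier_vec (dA*dB)" unfolding w_def by simp
    have "(swap_mat dA dB \<rho> *\<^sub>v v) \<bullet>c v
      = (\<Sum>b<dB. \<Sum>a<dA. (\<Sum>b'<dB. \<Sum>a'<dA. \<rho> $$ (a*dB+b, a'*dB+b') * v $ (b'*dA+a')) * cnj (v $ (b*dA+a)))"
      unfolding quadratic_form_sum[OF swap_mat_carrier_mat v] sum_mult_split by (simp add: index_swap_mat)
    also have "\<dots> = (\<Sum>a<dA. \<Sum>b<dB. (\<Sum>a'<dA. \<Sum>b'<dB. \<rho> $$ (a*dB+b, a'*dB+b') * w $ (a'*dB+b')) * cnj (w $ (a*dB+b)))"
      by (subst sum.swap, intro sum.cong refl, subst (2) sum.swap) (simp add: w_def pair_index_less)
    also have "\<dots> = (\<rho> *\<^sub>v w) \<bullet>c w"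
      unfolding quadratic_form_sum[OF rc(1) w] sum_mult_split ..
    finally show ?thesis using r w unfolding psd_def by simp
  qed
  then show ?thesis unfolding psd_def using rc by (simp add: madj_swap_mat)
qed

lemma density_swap_mat: assumes "density (dA*dB) \<rho>" shows "density (dB*dA) (swap_mat dA dB \<rho>)"
proof -
  have "psd (dA*dB) \<rho>" "mtrace \<rho> = 1" using assms unfolding density_def by auto
  moreover have "\<rho> \<in> carrier_mat (dA*dB) (dA*dB)" using calculation(1) unfolding psd_def by simp
  ultimately show ?thesis unfolding density_def by (simp add: psd_swap_mat mtrace_swap_mat)
qed

lemma linear_opD:
  assumes "linear_op din dout \<Phi>"
  shows "X \<in> carrier_mat din din \<Longrightarrow> \<Phi> X \<in> carrier_mat dout dout"
    "X \<in> carrier_mat din din \<Longrightarrow> Y \<in> carrier_mat din din \<Longrightarrow> \<Phi> (X + Y) = \<Phi> X + \<Phi> Y"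
    "X \<in> carrier_mat din din \<Longrightarrow> \<Phi> (c \<cdot>\<^sub>m X) = c \<cdot>\<^sub>m \<Phi> X"
  using assms unfolding linear_op_def by auto

lemma linear_op_minus: assumes T: "linear_op d d' T" and A: "A \<in> carrier_mat d d" and B: "B \<in> carrier_mat d d"
  shows "T (A - B) = T A - T B"
proof -
  have "A - B = A + (-1) \<cdot>\<^sub>m B" using A B by (intro eq_matI) auto
  then have "T (A - B) = T A + (-1) \<cdot>\<^sub>m T B" using A B by (simp add: linear_opD[OF T])
  also have "\<dots> = T A - T B" using linear_opD(1)[OF T A] linear_opD(1)[OF T B] by (intro eq_matI) auto
  finally show ?thesis .
qed

lemma linear_op_sum_mat: assumes T: "linear_op d d' T" and F: "finite F" and M: "\<And>x. x \<in> F \<Longrightarrow> M x \<in> carrier_mat d d"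
  shows "T (mat d d (\<lambda>(p,q). \<Sum>x\<in>F. c x * M x $$ (p,q))) = mat d' d' (\<lambda>(p,q). \<Sum>x\<in>F. c x * T (M x) $$ (p,q))"
  using F M
proof (induction F rule: finite_induct)
  case empty
  have "T (0\<^sub>m d d) = T ((0::complex) \<cdot>\<^sub>m 0\<^sub>m d d)" by simp
  also have "\<dots> = 0 \<cdot>\<^sub>m T (0\<^sub>m d d)" by (rule linear_opD(3)[OF T zero_carrier_mat])
  also have "\<dots> = 0\<^sub>m d' d'" using linear_opD(1)[OF T zero_carrier_mat] by (intro eq_matI) auto
  finally have "T (0\<^sub>m d d) = 0\<^sub>m d' d'" .
  moreover have "mat k k (\<lambda>_. 0) = (0\<^sub>m k k :: complex mat)" for k
    by (intro eq_matI) auto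
  ultimately show ?case by simp
next
  case (insert x F)
  have Mx: "M x \<in> carrier_mat d d" and TMx: "T (M x) \<in> carrier_mat d' d'"
    using insert linear_opD(1)[OF T] by auto
  have "mat d d (\<lambda>(p,q). \<Sum>y\<in>insert x F. c y * M y $$ (p,q)) = c x \<cdot>\<^sub>m M x + mat d d (\<lambda>(p,q). \<Sum>y\<in>F. c y * M y $$ (p,q))"
    using insert by (intro eq_matI) (auto simp: carrier_matD[OF Mx])
  then have "T (mat d d (\<lambda>(p,q). \<Sum>y\<in>insert x F. c y * M y $$ (p,q))) = c x \<cdot>\<^sub>m T (M x) + T (mat d d (\<lambda>(p,q). \<Sum>y\<in>F. c y * M y $$ (p,q)))"
    using Mx by (simp add: linear_opD[OF T])
  also have "T (mat d d (\<lambda>(p,q). \<Sum>y\<in>F. c y * M y $$ (p,q))) = mat d' d' (\<lambda>(p,q). \<Sum>y\<in>F. c y * T (M y) $$ (p,q))"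
    by (rule insert.IH) (use insert.prems in auto)
  also have "c x \<cdot>\<^sub>m T (M x) + \<dots> = mat d' d' (\<lambda>(p,q). \<Sum>y\<in>insert x F. c y * T (M y) $$ (p,q))"
    using insert by (intro eq_matI) (auto simp: carrier_matD[OF TMx])
  finally show ?case .
qed

definition positive_map :: "nat \<Rightarrow> nat \<Rightarrow> (complex mat \<Rightarrow> complex mat) \<Rightarrow> bool" where
  "positive_map din dout \<Phi> \<longleftrightarrow> linear_op din dout \<Phi> \<and> (\<forall>X. psd din X \<longrightarrow> psd dout (\<Phi> X))"

lemma index_ampl: "i < k \<Longrightarrow> j < k \<Longrightarrow> a < dout \<Longrightarrow> a' < dout \<Longrightarrow>
  ampl k din dout \<Phi> X $$ (i*dout+a, j*dout+a') = \<Phi> (mat_block din X i j) $$ (a,a')"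
  unfolding ampl_def mat_block_def by (simp add: pair_index_less)

lemma ampl_one: assumes X: "X \<in> carrier_mat din din" and \<Phi>: "\<Phi> X \<in> carrier_mat dout dout"
  shows "ampl 1 din dout \<Phi> X = \<Phi> X"
proof -
  have "mat din din (\<lambda>(p,q). X $$ (p,q)) = X" using X by (intro eq_matI) auto
  then show ?thesis unfolding ampl_def using \<Phi> by (intro eq_matI) auto
qed

lemma cp_map_imp_positive_map: assumes cp: "cp_map din dout \<Phi>" shows "positive_map din dout \<Phi>"
proof -
  have lin: "linear_op din dout \<Phi>" using cp unfolding cp_map_def by simp
  have "psd dout (\<Phi> X)" if X: "psd din X" for X
  proof -
    have Xc: "X \<in> carrier_mat din din" using X unfolding psd_def by simp
    have "ampl 1 din dout \<Phi> X = \<Phi> X" by (rule ampl_one[where \<Phi>=\<Phi>, OF Xc linear_opD(1)[OF lin Xc]])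
    then show ?thesis using cp X unfolding cp_map_def by (metis mult_1)
  qed
  then show ?thesis using lin unfolding positive_map_def by simp
qed

lemma mtrace_ampl: assumes T: "linear_op d d' T"
  shows "mtrace (ampl k d d' T X) = mtrace (T (ptrace_A k d X))"
proof -
  have "mtrace (ampl k d d' T X) = (\<Sum>b<k. \<Sum>a<d'. T (mat_block d X b b) $$ (a,a))"
    unfolding mtrace_def by (simp add: ampl_def sum_mult_split index_ampl[symmetric] pair_index_less)
  also have "\<dots> = mtrace (mat d' d' (\<lambda>(p,q). \<Sum>b<k. 1 * T (mat_block d X b b) $$ (p,q)))"
    unfolding mtrace_def by (simp add: sum.swap[of _ "{..<d'}"])
  also have "mat d' d' (\<lambda>(p,q). \<Sum>b<k. 1 * T (mat_block d X b b) $$ (p,q)) =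
      T (mat d d (\<lambda>(p,q). \<Sum>b<k. 1 * mat_block d X b b $$ (p,q)))"
    by (rule linear_op_sum_mat[symmetric, OF T]) auto
  also have "mat d d (\<lambda>(p,q). \<Sum>b<k. 1 * mat_block d X b b $$ (p,q)) = ptrace_A k d X"
    by (intro eq_matI) (simp_all add: index_ptrace_A)
  finally show ?thesis .
qed

definition swap_map :: "nat \<Rightarrow> nat \<Rightarrow> (complex mat \<Rightarrow> complex mat) \<Rightarrow> complex mat \<Rightarrow> complex mat" where
  "swap_map dA dB P X = swap_mat dA dB (P (swap_mat dB dA X))"

lemma positive_map_swap_map: assumes P: "positive_map (dA*dB) (dA*dB) P"
  shows "positive_map (dB*dA) (dB*dA) (swap_map dA dB P)"
proof -
  have lin: "linear_op (dA*dB) (dA*dB) P" using P unfolding positive_map_def by simp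
  have "linear_op (dB*dA) (dB*dA) (swap_map dA dB P)"
    unfolding linear_op_def swap_map_def
    using linear_opD[OF lin] by (simp add: swap_mat_add swap_mat_smult)
  moreover have "psd (dB*dA) (swap_map dA dB P X)" if "psd (dB*dA) X" for X
    using P psd_swap_mat that unfolding positive_map_def swap_map_def by blast
  ultimately show ?thesis unfolding positive_map_def by blast
qed

lemma mtrace_swap_map:
  assumes P: "linear_op (dA*dB) (dA*dB) P" and tp: "\<forall>X\<in>carrier_mat (dA*dB) (dA*dB). mtrace (P X) = mtrace X"
  shows "\<forall>X\<in>carrier_mat (dB*dA) (dB*dA). mtrace (swap_map dA dB P X) = mtrace X"
proof
  fix X :: "complex mat" assume X: "X \<in> carrier_mat (dB*dA) (dB*dA)"
  have "P (swap_mat dB dA X) \<in> carrier_mat (dA*dB) (dA*dB)" by (rule linear_opD(1)[OF P swap_mat_carrier_mat])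
  then show "mtrace (swap_map dA dB P X) = mtrace X" using tp X unfolding swap_map_def by (simp add: mtrace_swap_mat)
qed

lemma density_scaled_psd_add: assumes X: "psd n X" and \<rho>0: "density n \<rho>0"
  obtains c :: real where "c > 0" "density n (complex_of_real (1/c) \<cdot>\<^sub>m (X + \<rho>0))"
proof -
  have Xc: "X \<in> carrier_mat n n" and rc: "\<rho>0 \<in> carrier_mat n n"
    using X \<rho>0 unfolding psd_def density_def by auto
  define c where "c = Re (mtrace (X + \<rho>0))"
  have "mtrace (X + \<rho>0) = mtrace X + 1" using mtrace_add[OF Xc rc] \<rho>0 unfolding density_def by simp
  then have c: "c > 0" using psd_mtrace[OF X] unfolding c_def by simp
  have XY: "psd n (X + \<rho>0)" using psd_add[OF X] \<rho>0 unfolding density_def by simp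
  have "mtrace (X + \<rho>0) = complex_of_real c" using psd_mtrace(1)[OF XY] unfolding c_def .
  then have "mtrace (complex_of_real (1/c) \<cdot>\<^sub>m (X + \<rho>0)) = 1" using c mtrace_smult[of "X + \<rho>0" n] Xc rc by simp
  then show thesis using that[OF c] psd_smult[OF XY, of "1/c"] c unfolding density_def by simp
qed

lemma ptrace_B_no_signalling_psd:
  assumes P: "linear_op (dA*dB) (dA*dB) P" and T: "linear_op dA dA T"
    and ns: "\<forall>\<rho>. density (dA*dB) \<rho> \<longrightarrow> ptrace_B dA dB (P \<rho>) = T (ptrace_B dA dB \<rho>)"
    and \<rho>0: "density (dA*dB) \<rho>0" and X: "psd (dA*dB) X"
  shows "ptrace_B dA dB (P X) = T (ptrace_B dA dB X)"
proof -
  have Xc: "X \<in> carrier_mat (dA*dB) (dA*dB)" and rc: "\<rho>0 \<in> carrier_mat (dA*dB) (dA*dB)"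
    using X \<rho>0 unfolding psd_def density_def by auto
  \<comment> \<open>the hypothesis applies to the state obtained by normalising X + \<rho>0, and P, T are linear\<close>
  obtain c :: real where c: "c > 0" and "density (dA*dB) (complex_of_real (1/c) \<cdot>\<^sub>m (X + \<rho>0))"
    using density_scaled_psd_add[OF X \<rho>0] by blast
  let ?k = "complex_of_real (1/c)"
  from \<open>density (dA*dB) (?k \<cdot>\<^sub>m (X + \<rho>0))\<close> have "ptrace_B dA dB (P (?k \<cdot>\<^sub>m (X + \<rho>0))) = T (ptrace_B dA dB (?k \<cdot>\<^sub>m (X + \<rho>0)))"
    using ns by blast
  then have "?k \<cdot>\<^sub>m (ptrace_B dA dB (P X) + ptrace_B dA dB (P \<rho>0)) = ?k \<cdot>\<^sub>m (T (ptrace_B dA dB X) + T (ptrace_B dA dB \<rho>0))"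
    using Xc rc linear_opD(1)[OF P Xc] linear_opD(1)[OF P rc]
    by (simp add: linear_opD[OF P] linear_opD[OF T] ptrace_B_smult ptrace_B_add)
  moreover have "ptrace_B dA dB (P \<rho>0) = T (ptrace_B dA dB \<rho>0)" using ns \<rho>0 by blast
  ultimately have E: "?k \<cdot>\<^sub>m (ptrace_B dA dB (P X) + T (ptrace_B dA dB \<rho>0)) = ?k \<cdot>\<^sub>m (T (ptrace_B dA dB X) + T (ptrace_B dA dB \<rho>0))"
    by simp
  have TX: "T (ptrace_B dA dB X) \<in> carrier_mat dA dA" and T\<rho>: "T (ptrace_B dA dB \<rho>0) \<in> carrier_mat dA dA"
    using linear_opD(1)[OF T] by auto
  show ?thesis
  proof (rule eq_matI)
    fix i j assume "i < dim_row (T (ptrace_B dA dB X))" "j < dim_col (T (ptrace_B dA dB X))"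
    then have "i < dA" "j < dA" using TX by auto
    then have "?k * (ptrace_B dA dB (P X) $$ (i,j) + T (ptrace_B dA dB \<rho>0) $$ (i,j)) =
        ?k * (T (ptrace_B dA dB X) $$ (i,j) + T (ptrace_B dA dB \<rho>0) $$ (i,j))"
      using arg_cong[OF E, of "\<lambda>M. M $$ (i,j)"] TX T\<rho> by simp
    then show "ptrace_B dA dB (P X) $$ (i,j) = T (ptrace_B dA dB X) $$ (i,j)" using c by simp
  qed (use TX in auto)
qed

subsection \<open>Correlations of coarse-grained Pauli measurements\<close>

lemma proj_carrier_mat[simp]: "K \<in> carrier_mat n n \<Longrightarrow> proj n K s \<in> carrier_mat n n"
  unfolding proj_def by simp

lemma madj_proj: "K \<in> carrier_mat n n \<Longrightarrow> madj K = K \<Longrightarrow> madj (proj n K s) = proj n K s"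
  unfolding proj_def by (simp add: madj_smult madj_add[of _ n n])

lemma swap_mat_proj: "K \<in> carrier_mat (dA*dB) (dA*dB) \<Longrightarrow>
  swap_mat dA dB (proj (dA*dB) K s) = proj (dB*dA) (swap_mat dA dB K) s"
  unfolding proj_def by (simp add: swap_mat_smult swap_mat_add swap_mat_one)

lemma mtrace_proj_mult: assumes K: "K \<in> carrier_mat n n" and G: "G \<in> carrier_mat n n"
  shows "mtrace (proj n K t * G) = 1/2 * (mtrace G + complex_of_real t * mtrace (K * G))"
proof -
  have "proj n K t * G = complex_of_real (1/2) \<cdot>\<^sub>m (G + complex_of_real t \<cdot>\<^sub>m (K * G))"
    unfolding proj_def using K G
    by (simp add: mult_smult_assoc_mat[of _ n n] add_mult_distrib_mat[of _ n n] left_mult_one_mat)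
  then show ?thesis using K G by (simp add: mtrace_smult[of _ n] mtrace_add[of _ n] mult_smult_assoc_mat[of _ n n])
qed

lemma index_luders_difference:
  assumes K: "K \<in> carrier_mat n n" and r: "\<rho> \<in> carrier_mat n n" and ij: "i < n" "j < n"
  shows "(proj n K 1 * \<rho> * proj n K 1) $$ (i,j) - (proj n K (-1) * \<rho> * proj n K (-1)) $$ (i,j)
    = 1/2 * ((K * \<rho>) $$ (i,j) + (\<rho> * K) $$ (i,j))"
proof -
  have "(proj n K s * \<rho> * proj n K s) $$ (i,j) = 1/4 * (\<rho> $$ (i,j) + s * (K * \<rho>) $$ (i,j)
      + s * ((\<rho> * K) $$ (i,j) + s * (K * (\<rho> * K)) $$ (i,j)))" for s
  proof -
    have "proj n K s * \<rho> = complex_of_real (1/2) \<cdot>\<^sub>m (\<rho> + complex_of_real s \<cdot>\<^sub>m (K * \<rho>))"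
      unfolding proj_def using K r
      by (simp add: mult_smult_assoc_mat[of _ n n] add_mult_distrib_mat[of _ n n] left_mult_one_mat)
    moreover have "(\<rho> + complex_of_real s \<cdot>\<^sub>m (K * \<rho>)) * (1\<^sub>m n + complex_of_real s \<cdot>\<^sub>m K) =
        \<rho> + (complex_of_real s \<cdot>\<^sub>m (K * \<rho>) + complex_of_real s \<cdot>\<^sub>m (\<rho> * K + complex_of_real s \<cdot>\<^sub>m (K * (\<rho> * K))))"
      using K r by (simp add: mult_add_distrib_mat[where nr=n and n=n and nc=n]
          add_mult_distrib_mat[where nr=n and n=n and nc=n] right_mult_one_mat
          mult_smult_distrib[where nr=n and n=n and nc=n] mult_smult_assoc_mat[where nr=n and n=n and nc=n])
    ultimately have "proj n K s * \<rho> * proj n K s = complex_of_real (1/2) \<cdot>\<^sub>m (complex_of_real (1/2) \<cdot>\<^sub>m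
        (\<rho> + (complex_of_real s \<cdot>\<^sub>m (K * \<rho>) + complex_of_real s \<cdot>\<^sub>m (\<rho> * K + complex_of_real s \<cdot>\<^sub>m (K * (\<rho> * K))))))"
      unfolding proj_def using K r by (simp add: mult_smult_distrib[where nr=n and n=n and nc=n] mult_smult_assoc_mat[where nr=n and n=n and nc=n])
    then show ?thesis using K r ij by simp
  qed
  then show ?thesis by (simp add: algebra_simps)
qed

lemma corr_eq_mtrace_diff:
  assumes K1: "K1 \<in> carrier_mat n n" and K2: "K2 \<in> carrier_mat n n" "madj K2 = K2"
    and G: "\<And>s. psd n (P (proj n K1 s * \<rho> * proj n K1 s))"
  shows "complex_of_real (corr n P K1 K2 \<rho>) =
    mtrace (K2 * P (proj n K1 1 * \<rho> * proj n K1 1)) - mtrace (K2 * P (proj n K1 (-1) * \<rho> * proj n K1 (-1)))"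
proof -
  define G1 where "G1 = P (proj n K1 1 * \<rho> * proj n K1 1)"
  define G2 where "G2 = P (proj n K1 (-1) * \<rho> * proj n K1 (-1))"
  have g: "G1 \<in> carrier_mat n n" "madj G1 = G1" "G2 \<in> carrier_mat n n" "madj G2 = G2"
    using G[of 1] G[of "-1"] unfolding G1_def G2_def psd_def by auto
  have "corr n P K1 K2 \<rho> = (Re (mtrace (proj n K2 1 * G1)) - Re (mtrace (proj n K2 (-1) * G1)))
      - (Re (mtrace (proj n K2 1 * G2)) - Re (mtrace (proj n K2 (-1) * G2)))"
    unfolding corr_def G1_def G2_def by simp
  also have "\<dots> = Re (mtrace (K2 * G1)) - Re (mtrace (K2 * G2))"
    using K2 g by (simp add: mtrace_proj_mult algebra_simps)
  finally show ?thesis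
    using mtrace_hermitian_mult_real[OF K2 g(1,2)] mtrace_hermitian_mult_real[OF K2 g(3,4)]
    unfolding G1_def G2_def by (metis of_real_diff)
qed

lemma corr_swap_map:
  assumes P: "linear_op (dA*dB) (dA*dB) P"
    and K: "K1 \<in> carrier_mat (dA*dB) (dA*dB)" "K2 \<in> carrier_mat (dA*dB) (dA*dB)" and r: "\<rho> \<in> carrier_mat (dA*dB) (dA*dB)"
  shows "corr (dB*dA) (swap_map dA dB P) (swap_mat dA dB K1) (swap_mat dA dB K2) (swap_mat dA dB \<rho>) = corr (dA*dB) P K1 K2 \<rho>"
proof -
  have "mtrace (proj (dB*dA) (swap_mat dA dB K2) t * swap_map dA dB P
       (proj (dB*dA) (swap_mat dA dB K1) s * swap_mat dA dB \<rho> * proj (dB*dA) (swap_mat dA dB K1) s))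
    = mtrace (proj (dA*dB) K2 t * P (proj (dA*dB) K1 s * \<rho> * proj (dA*dB) K1 s))" for s t
  proof -
    have X: "proj (dA*dB) K1 s * \<rho> * proj (dA*dB) K1 s \<in> carrier_mat (dA*dB) (dA*dB)"
      using mult_carrier_mat[OF mult_carrier_mat[OF proj_carrier_mat[OF K(1)] r] proj_carrier_mat[OF K(1)]] .
    then have PX: "P (proj (dA*dB) K1 s * \<rho> * proj (dA*dB) K1 s) \<in> carrier_mat (dA*dB) (dA*dB)"
      by (rule linear_opD(1)[OF P])
    have Y: "proj (dA*dB) K1 s * \<rho> \<in> carrier_mat (dA*dB) (dA*dB)"
      using mult_carrier_mat[OF proj_carrier_mat[OF K(1)] r] .
    show ?thesis
      using K r X PX Y proj_carrier_mat[OF K(1)] proj_carrier_mat[OF K(2)]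
        mult_carrier_mat[OF proj_carrier_mat[OF K(2)] PX] unfolding swap_map_def
      by (simp add: swap_mat_proj[symmetric] swap_mat_mult[symmetric] swap_mat_swap_mat mtrace_swap_mat)
  qed
  then show ?thesis unfolding corr_def by simp
qed

lemma ptrace_B_luders_difference:
  assumes s: "\<sigma> \<in> carrier_mat dB dB" and r: "\<rho> \<in> carrier_mat (dA*dB) (dA*dB)"
  defines "K \<equiv> kron (1\<^sub>m dA) \<sigma>"
  shows "ptrace_B dA dB (proj (dA*dB) K 1 * \<rho> * proj (dA*dB) K 1) - ptrace_B dA dB (proj (dA*dB) K (-1) * \<rho> * proj (dA*dB) K (-1))
    = ptrace_B dA dB (K * \<rho>)"
proof (rule eq_matI)
  have K: "K \<in> carrier_mat (dA*dB) (dA*dB)" unfolding K_def using kron_carrier_mat[OF one_carrier_mat s] .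
  fix p q assume "p < dim_row (ptrace_B dA dB (K * \<rho>))" "q < dim_col (ptrace_B dA dB (K * \<rho>))"
  then have pq: "p < dA" "q < dA" by auto
  have "(ptrace_B dA dB (proj (dA*dB) K 1 * \<rho> * proj (dA*dB) K 1) - ptrace_B dA dB (proj (dA*dB) K (-1) * \<rho> * proj (dA*dB) K (-1))) $$ (p,q)
      = (\<Sum>k<dB. 1/2 * ((K * \<rho>) $$ (p*dB+k, q*dB+k) + (\<rho> * K) $$ (p*dB+k, q*dB+k)))"
    using pq by (simp add: index_ptrace_B index_luders_difference[OF K r] pair_index_less sum_subtractf[symmetric])
  also have "\<dots> = 1/2 * (ptrace_B dA dB (K * \<rho>) $$ (p,q) + ptrace_B dA dB (\<rho> * K) $$ (p,q))"
    by (simp only: index_ptrace_B[OF pq] distrib_left sum.distrib sum_distrib_left)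
  also have "\<dots> = ptrace_B dA dB (K * \<rho>) $$ (p,q)"
    unfolding K_def using index_ptrace_B_kron_one_mult[OF s r pq] index_ptrace_B_mult_kron_one[OF s r pq] by simp
  finally show "(ptrace_B dA dB (proj (dA*dB) K 1 * \<rho> * proj (dA*dB) K 1) - ptrace_B dA dB (proj (dA*dB) K (-1) * \<rho> * proj (dA*dB) K (-1))) $$ (p,q)
      = ptrace_B dA dB (K * \<rho>) $$ (p,q)" .
qed auto

lemma corr_no_signalling:
  assumes P: "positive_map (dA*dB) (dA*dB) P" and T: "linear_op dA dA T"
    and ns: "\<forall>\<rho>. density (dA*dB) \<rho> \<longrightarrow> ptrace_B dA dB (P \<rho>) = T (ptrace_B dA dB \<rho>)"
    and r: "density (dA*dB) \<rho>"
    and \<sigma>B: "\<sigma>B \<in> carrier_mat dB dB" "madj \<sigma>B = \<sigma>B" and \<sigma>A: "\<sigma>A \<in> carrier_mat dA dA" "madj \<sigma>A = \<sigma>A"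
  shows "complex_of_real (corr (dA*dB) P (kron (1\<^sub>m dA) \<sigma>B) (kron \<sigma>A (1\<^sub>m dB)) \<rho>) =
    mtrace (\<sigma>A * T (ptrace_B dA dB (kron (1\<^sub>m dA) \<sigma>B * \<rho>)))"
proof -
  define K1 where "K1 = kron (1\<^sub>m dA) \<sigma>B"
  define K2 where "K2 = kron \<sigma>A (1\<^sub>m dB)"
  define X where "X s = proj (dA*dB) K1 s * \<rho> * proj (dA*dB) K1 s" for s
  have lin: "linear_op (dA*dB) (dA*dB) P" and pos: "\<And>X. psd (dA*dB) X \<Longrightarrow> psd (dA*dB) (P X)"
    using P unfolding positive_map_def by auto
  have rp: "psd (dA*dB) \<rho>" and rc: "\<rho> \<in> carrier_mat (dA*dB) (dA*dB)" using r unfolding density_def psd_def by auto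
  have K1: "K1 \<in> carrier_mat (dA*dB) (dA*dB)" "madj K1 = K1"
    unfolding K1_def using kron_carrier_mat[OF one_carrier_mat \<sigma>B(1)] \<sigma>B by (auto simp: madj_kron)
  have K2: "K2 \<in> carrier_mat (dA*dB) (dA*dB)" "madj K2 = K2"
    unfolding K2_def using kron_carrier_mat[OF \<sigma>A(1) one_carrier_mat] \<sigma>A by (auto simp: madj_kron)
  have X: "psd (dA*dB) (X s)" for s
    unfolding X_def by (rule psd_hermitian_sandwich[OF rp]) (use K1 madj_proj[OF K1] in auto)
  have PX: "P (X s) \<in> carrier_mat (dA*dB) (dA*dB)" for s using pos[OF X] unfolding psd_def by simp
  have "complex_of_real (corr (dA*dB) P K1 K2 \<rho>) = mtrace (K2 * P (X 1)) - mtrace (K2 * P (X (-1)))"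
    unfolding X_def by (rule corr_eq_mtrace_diff[OF K1(1) K2]) (use pos X X_def in simp)
  also have "\<dots> = mtrace (\<sigma>A * T (ptrace_B dA dB (X 1))) - mtrace (\<sigma>A * T (ptrace_B dA dB (X (-1))))"
    unfolding K2_def using PX
    by (simp add: mtrace_kron_one_mult[OF \<sigma>A(1)] ptrace_B_no_signalling_psd[OF lin T ns r X])
  also have "\<dots> = mtrace (\<sigma>A * T (ptrace_B dA dB (X 1) - ptrace_B dA dB (X (-1))))"
    using linear_opD(1)[OF T] \<sigma>A by (simp add: mtrace_mult_minus linear_op_minus[OF T])
  also have "\<dots> = mtrace (\<sigma>A * T (ptrace_B dA dB (K1 * \<rho>)))"
    unfolding X_def K1_def using ptrace_B_luders_difference[OF \<sigma>B(1) rc] by simp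
  finally show ?thesis unfolding K1_def K2_def .
qed

lemma sum_pauli_ptrace_B:
  assumes r: "\<rho> \<in> carrier_mat (dA*2^n) (dA*2^n)" and b: "b < 2^n" "b' < 2^n" and pq: "p < dA" "q < dA"
  shows "(\<Sum>ks\<in>pauli_idx n. pauli_str ks $$ (b,b') * ptrace_B dA (2^n) (kron (1\<^sub>m dA) (pauli_str ks) * \<rho>) $$ (p,q))
    = 2^n * \<rho> $$ (p*2^n+b, q*2^n+b')"
  using pauli_expansion[OF mat_block_carrier_mat b, of \<rho> p q] b
  by (simp add: index_ptrace_B_kron_one_mult[OF pauli_idx_carrier_mat r pq] mult.commute)

subsection \<open>The pseudo-density matrices\<close>

lemma index_R_B1A2:
  assumes "b < 2^nB" "a < 2^nA" "b' < 2^nB" "a' < 2^nA"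
  shows "R_B1A2 nA nB P \<rho> $$ (b*2^nA+a, b'*2^nA+a') = (\<Sum>j\<in>pauli_idx nB. \<Sum>k\<in>pauli_idx nA.
      complex_of_real (corr (2^nA*2^nB) P (kron (1\<^sub>m (2^nA)) (pauli_str j)) (kron (pauli_str k) (1\<^sub>m (2^nB))) \<rho>)
      / (2^nA*2^nB) * (pauli_str j $$ (b,b') * pauli_str k $$ (a,a')))"
proof -
  have "b*2^nA+a < 2^nB*2^nA" "b'*2^nA+a' < 2^nB*2^nA" using assms by (simp_all add: pair_index_less)
  moreover have "kron (pauli_str j) (pauli_str k) $$ (b*2^nA+a, b'*2^nA+a') = pauli_str j $$ (b,b') * pauli_str k $$ (a,a')"
    if "j \<in> pauli_idx nB" "k \<in> pauli_idx nA" for j k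
    using index_kron_pair[OF pauli_idx_carrier_mat[OF that(1)] pauli_idx_carrier_mat[OF that(2)]] assms by blast
  ultimately show ?thesis unfolding R_B1A2_def by (simp add: power_add cong: sum.cong)
qed

lemma R_B1A2_eq_ampl:
  assumes P: "positive_map (2^nA*2^nB) (2^nA*2^nB) P" and T: "linear_op (2^nA) (2^nA) T"
    and ns: "\<forall>\<rho>. density (2^nA*2^nB) \<rho> \<longrightarrow> ptrace_B (2^nA) (2^nB) (P \<rho>) = T (ptrace_B (2^nA) (2^nB) \<rho>)"
    and r: "density (2^nA*2^nB) \<rho>"
  shows "R_B1A2 nA nB P \<rho> = ampl (2^nB) (2^nA) (2^nA) T (swap_mat (2^nA) (2^nB) \<rho>)"
proof (rule eq_mat_pair_indexI[of _ "2^nB" "2^nA"])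
  let ?dA = "2^nA::nat" and ?dB = "2^nB::nat"
  let ?D = "\<lambda>j. ptrace_B ?dA ?dB (kron (1\<^sub>m ?dA) (pauli_str j) * \<rho>)"
  have rc: "\<rho> \<in> carrier_mat (?dA*?dB) (?dA*?dB)" using r unfolding density_def psd_def by auto
  fix b a b' a' assume ba: "b < ?dB" "a < ?dA" "b' < ?dB" "a' < ?dA"
  have cor: "complex_of_real (corr (?dA*?dB) P (kron (1\<^sub>m ?dA) (pauli_str j)) (kron (pauli_str k) (1\<^sub>m ?dB)) \<rho>)
     = mtrace (pauli_str k * T (?D j))" if "j \<in> pauli_idx nB" "k \<in> pauli_idx nA" for j k
    by (rule corr_no_signalling[OF P T ns r]) (use that pauli_idx_carrier_mat madj_pauli_str in auto)
  have "R_B1A2 nA nB P \<rho> $$ (b*?dA+a, b'*?dA+a') = (\<Sum>j\<in>pauli_idx nB. pauli_str j $$ (b,b') / ?dB *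
      ((\<Sum>k\<in>pauli_idx nA. mtrace (pauli_str k * T (?D j)) * pauli_str k $$ (a,a')) / ?dA))"
    unfolding index_R_B1A2[OF ba] sum_divide_distrib sum_distrib_left
    by (intro sum.cong refl) (simp add: cor mult_ac)
  also have "\<dots> = (\<Sum>j\<in>pauli_idx nB. pauli_str j $$ (b,b') / ?dB * T (?D j) $$ (a,a'))"
    using ba linear_opD(1)[OF T] by (simp add: pauli_expansion)
  also have "\<dots> = T (mat ?dA ?dA (\<lambda>(p,q). \<Sum>j\<in>pauli_idx nB. pauli_str j $$ (b,b') / ?dB * ?D j $$ (p,q))) $$ (a,a')"
    using ba by (subst linear_op_sum_mat[OF T]) simp_all
  also have "mat ?dA ?dA (\<lambda>(p,q). \<Sum>j\<in>pauli_idx nB. pauli_str j $$ (b,b') / ?dB * ?D j $$ (p,q))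
      = mat_block ?dA (swap_mat ?dA ?dB \<rho>) b b'"
    using ba rc by (intro eq_matI) (simp_all add: sum_divide_distrib[symmetric] mult.commute sum_pauli_ptrace_B index_swap_mat)
  also have "T \<dots> $$ (a,a') = ampl ?dB ?dA ?dA T (swap_mat ?dA ?dB \<rho>) $$ (b*?dA+a, b'*?dA+a')"
    using ba by (simp add: index_ampl)
  finally show "R_B1A2 nA nB P \<rho> $$ (b*?dA+a, b'*?dA+a') = ampl ?dB ?dA ?dA T (swap_mat ?dA ?dB \<rho>) $$ (b*?dA+a, b'*?dA+a')" .
qed (simp_all add: R_B1A2_def ampl_def)

lemma density_R_B1A2:
  assumes P: "positive_map (2^nA*2^nB) (2^nA*2^nB) P"
    and tp: "\<forall>X\<in>carrier_mat (2^nA*2^nB) (2^nA*2^nB). mtrace (P X) = mtrace X"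
    and T: "cp_map (2^nA) (2^nA) T"
    and ns: "\<forall>\<rho>. density (2^nA*2^nB) \<rho> \<longrightarrow> ptrace_B (2^nA) (2^nB) (P \<rho>) = T (ptrace_B (2^nA) (2^nB) \<rho>)"
    and r: "density (2^nA*2^nB) \<rho>"
  shows "density (2^nB*2^nA) (R_B1A2 nA nB P \<rho>)"
proof -
  have lin: "linear_op (2^nA) (2^nA) T" using T unfolding cp_map_def by simp
  have R: "R_B1A2 nA nB P \<rho> = ampl (2^nB) (2^nA) (2^nA) T (swap_mat (2^nA) (2^nB) \<rho>)"
    by (rule R_B1A2_eq_ampl[OF P lin ns r])
  have "density (2^nB*2^nA) (swap_mat (2^nA) (2^nB) \<rho>)" by (rule density_swap_mat[OF r])
  then have "psd (2^nB*2^nA) (R_B1A2 nA nB P \<rho>)" using T unfolding R cp_map_def density_def by blast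
  moreover have "mtrace (R_B1A2 nA nB P \<rho>) = 1"
  proof -
    have rc: "\<rho> \<in> carrier_mat (2^nA*2^nB) (2^nA*2^nB)" using r unfolding density_def psd_def by simp
    then have Pr: "P \<rho> \<in> carrier_mat (2^nA*2^nB) (2^nA*2^nB)"
      using P unfolding positive_map_def linear_op_def by blast
    have "mtrace (R_B1A2 nA nB P \<rho>) = mtrace (T (ptrace_B (2^nA) (2^nB) \<rho>))"
      unfolding R by (simp add: mtrace_ampl[OF lin] ptrace_A_swap_mat)
    also have "\<dots> = mtrace (P \<rho>)" using ns r mtrace_ptrace_B[OF Pr] by simp
    also have "\<dots> = 1" using tp rc r unfolding density_def by simp
    finally show ?thesis .
  qed
  ultimately show ?thesis unfolding density_def by simp
qed

lemma R_A1B2_eq_R_B1A2_swap: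
  assumes P: "linear_op (2^nA*2^nB) (2^nA*2^nB) P" and r: "\<rho> \<in> carrier_mat (2^nA*2^nB) (2^nA*2^nB)"
  shows "R_A1B2 nA nB P \<rho> = R_B1A2 nB nA (swap_map (2^nA) (2^nB) P) (swap_mat (2^nA) (2^nB) \<rho>)"
proof -
  have "corr (2^nA*2^nB) P (kron (pauli_str i) (1\<^sub>m (2^nB))) (kron (1\<^sub>m (2^nA)) (pauli_str l)) \<rho> =
    corr (2^nB*2^nA) (swap_map (2^nA) (2^nB) P) (kron (1\<^sub>m (2^nB)) (pauli_str i)) (kron (pauli_str l) (1\<^sub>m (2^nA)))
      (swap_mat (2^nA) (2^nB) \<rho>)" if "i \<in> pauli_idx nA" "l \<in> pauli_idx nB" for i l
    using corr_swap_map[OF P _ _ r, of "kron (pauli_str i) (1\<^sub>m (2^nB))" "kron (1\<^sub>m (2^nA)) (pauli_str l)"]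
      pauli_idx_carrier_mat[OF that(1)] pauli_idx_carrier_mat[OF that(2)]
    by (simp add: swap_mat_kron kron_carrier_mat)
  then show ?thesis unfolding R_A1B2_def R_B1A2_def by (intro eq_matI) (simp_all add: add.commute cong: sum.cong)
qed

lemma density_R_A1B2:
  assumes P: "positive_map (2^nA*2^nB) (2^nA*2^nB) P"
    and tp: "\<forall>X\<in>carrier_mat (2^nA*2^nB) (2^nA*2^nB). mtrace (P X) = mtrace X"
    and S: "cp_map (2^nB) (2^nB) S"
    and ns: "\<forall>\<rho>. density (2^nA*2^nB) \<rho> \<longrightarrow> ptrace_A (2^nA) (2^nB) (P \<rho>) = S (ptrace_A (2^nA) (2^nB) \<rho>)"
    and r: "density (2^nA*2^nB) \<rho>"
  shows "density (2^nA*2^nB) (R_A1B2 nA nB P \<rho>)"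
proof -
  let ?P = "swap_map (2^nA) (2^nB) P"
  have lin: "linear_op (2^nA*2^nB) (2^nA*2^nB) P" using P unfolding positive_map_def by simp
  have ns': "\<forall>\<sigma>. density (2^nB*2^nA) \<sigma> \<longrightarrow> ptrace_B (2^nB) (2^nA) (?P \<sigma>) = S (ptrace_B (2^nB) (2^nA) \<sigma>)"
  proof (intro allI impI)
    fix \<sigma> assume "density (2^nB*2^nA) \<sigma>"
    then have "density (2^nA*2^nB) (swap_mat (2^nB) (2^nA) \<sigma>)" by (rule density_swap_mat)
    then show "ptrace_B (2^nB) (2^nA) (?P \<sigma>) = S (ptrace_B (2^nB) (2^nA) \<sigma>)"
      using ns unfolding swap_map_def by (simp add: ptrace_B_swap_mat ptrace_A_swap_mat)
  qed
  have "density (2^nA*2^nB) (R_B1A2 nB nA ?P (swap_mat (2^nA) (2^nB) \<rho>))"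
    by (rule density_R_B1A2[OF positive_map_swap_map[OF P] mtrace_swap_map[OF lin tp] S ns' density_swap_mat[OF r]])
  moreover have "R_A1B2 nA nB P \<rho> = R_B1A2 nB nA ?P (swap_mat (2^nA) (2^nB) \<rho>)"
    by (rule R_A1B2_eq_R_B1A2_swap[OF lin]) (use r in \<open>simp add: density_def psd_def\<close>)
  ultimately show ?thesis by simp
qed

theorem corollary1:
  fixes nA nB :: nat
    and P :: "complex mat \<Rightarrow> complex mat"
    and \<rho> :: "complex mat"
  assumes "nA \<ge> 1" and "nB \<ge> 1"
    and "cptp_map (2^nA * 2^nB) (2^nA * 2^nB) P"
    and "no_signalling (2^nA) (2^nB) P"
    and "density (2^nA * 2^nB) \<rho>"
  shows "psd (2^nB * 2^nA) (R_B1A2 nA nB P \<rho>) \<and> psd (2^nA * 2^nB) (R_A1B2 nA nB P \<rho>) \<and>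
         pdm_neg (2^nB * 2^nA) (R_B1A2 nA nB P \<rho>) = 0 \<and>
         pdm_neg (2^nA * 2^nB) (R_A1B2 nA nB P \<rho>) = 0"
proof -
  have P: "positive_map (2^nA * 2^nB) (2^nA * 2^nB) P"
    and tp: "\<forall>X\<in>carrier_mat (2^nA * 2^nB) (2^nA * 2^nB). mtrace (P X) = mtrace X"
    using assms(3) cp_map_imp_positive_map unfolding cptp_map_def by auto
  obtain T S where "cp_map (2^nA) (2^nA) T" "cp_map (2^nB) (2^nB) S"
    and "\<forall>\<rho>. density (2^nA * 2^nB) \<rho> \<longrightarrow> ptrace_B (2^nA) (2^nB) (P \<rho>) = T (ptrace_B (2^nA) (2^nB) \<rho>)"
    and "\<forall>\<rho>. density (2^nA * 2^nB) \<rho> \<longrightarrow> ptrace_A (2^nA) (2^nB) (P \<rho>) = S (ptrace_A (2^nA) (2^nB) \<rho>)"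
    using assms(4) unfolding no_signalling_def by blast
  then have "density (2^nB * 2^nA) (R_B1A2 nA nB P \<rho>)" "density (2^nA * 2^nB) (R_A1B2 nA nB P \<rho>)"
    using density_R_B1A2[OF P tp] density_R_A1B2[OF P tp] assms(5) by blast+
  then show ?thesis by (simp add: density_def pdm_neg_density)
qed

end
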